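(* Assume the jump-amplitude density is Gaussian, $\varphi$ the centered normal density with variance $\beta>0$. Then there exist constants $c>0$ and $K>0$ such that for all $t>0$ and $x,y\in\mathbb{R}$ with $\frac{|y-x|}{t}\ge K$, $$\mathbb{P}\big(|X^x_t-x|>|y-x|\big)\le 2\exp\Big(-c\,|y-x|\sqrt{\ln\big(\tfrac{|y-x|}{t}\big)}\Big).$$
   Context: Setting: $x\in\mathbb{R}$, $(B_t)_{t\ge0}$ is a standard one-dimensional Brownian motion, $(Y_i)_{i\ge1}$ are i.i.d. real random variables with probability density $\varphi$, and $(T_i)_{i\ge1}$ are the arrival times of a Poisson process of rate $\lambda>0$; $B$, $(Y_i)$ and $(T_i)$ are mutually independent. The coefficients $\sigma,b:\mathbb{R}\to\mathbb{R}$ are bounded and twice differentiable with bounded derivatives of all orders, and $\inf_y|\sigma(y)|\ge\rho>0$. $X^x$ is the unique càdlàg adapted solution of $X^x_t=x+\int_0^t\sigma(X^x_s)dB_s+\int_0^tb(X^x_s)ds+\sum_{i\ge1}Y_i\mathbf 1_{T_i\le t}$. *)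

theory Defs
  imports "HOL-Probability.Probability"
begin

definition gen_sigma :: "'a measure \<Rightarrow> ('i \<Rightarrow> 'a \<Rightarrow> real) \<Rightarrow> 'i set \<Rightarrow> 'a set set" where
  "gen_sigma M Z I = sigma_sets (space M) (\<Union>i\<in>I. {Z i -` A \<inter> space M | A. A \<in> sets borel})"

definition std_brownian_motion :: "'a measure \<Rightarrow> (real \<Rightarrow> 'a \<Rightarrow> real) \<Rightarrow> bool" where
  "std_brownian_motion M B \<longleftrightarrow>
     (\<forall>t. B t \<in> borel_measurable M) \<and>
     (\<forall>\<omega>\<in>space M. B 0 \<omega> = 0 \<and> continuous_on {0..} (\<lambda>t. B t \<omega>)) \<and>
     (\<forall>s t. 0 \<le> s \<and> s < t \<longrightarrow>
        distributed M lborel (\<lambda>\<omega>. B t \<omega> - B s \<omega>) (normal_density 0 (sqrt (t - s)))) \<and>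
     (\<forall>(ts :: nat \<Rightarrow> real) n. 0 \<le> ts 0 \<and> (\<forall>i<n. ts i < ts (Suc i)) \<longrightarrow>
        prob_space.indep_vars M (\<lambda>_. borel) (\<lambda>i \<omega>. B (ts (Suc i)) \<omega> - B (ts i) \<omega>) {..<n})"

text \<open>Arrival times of a Poisson process of rate l, built from i.i.d. Exp(l)
  inter-arrival times E: T i = E 0 + ... + E i (the (i+1)-th arrival).\<close>
definition arrival_time :: "(nat \<Rightarrow> 'a \<Rightarrow> real) \<Rightarrow> nat \<Rightarrow> 'a \<Rightarrow> real" where
  "arrival_time E i \<omega> = (\<Sum>j\<le>i. E j \<omega>)"

definition jump_part :: "(nat \<Rightarrow> 'a \<Rightarrow> real) \<Rightarrow> (nat \<Rightarrow> 'a \<Rightarrow> real) \<Rightarrow> real \<Rightarrow> 'a \<Rightarrow> real" where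
  "jump_part E Y t \<omega> = (\<Sum>i\<in>{i. arrival_time E i \<omega> \<le> t}. Y i \<omega>)"

definition jump_setting ::
  "'a measure \<Rightarrow> (real \<Rightarrow> 'a \<Rightarrow> real) \<Rightarrow> (nat \<Rightarrow> 'a \<Rightarrow> real) \<Rightarrow> (nat \<Rightarrow> 'a \<Rightarrow> real)
     \<Rightarrow> (real \<Rightarrow> real) \<Rightarrow> real \<Rightarrow> bool" where
  "jump_setting M B Y E \<phi> l \<longleftrightarrow>
     prob_space M \<and> l > 0 \<and>
     std_brownian_motion M B \<and>
     prob_space.indep_vars M (\<lambda>_. borel) Y UNIV \<and>
     (\<forall>i. distributed M lborel (Y i) \<phi>) \<and>
     prob_space.indep_vars M (\<lambda>_. borel) E UNIV \<and>
     (\<forall>i. distributed M lborel (E i) (exponential_density l)) \<and>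
     prob_space.indep_sets M
       (\<lambda>k::nat. if k = 0 then gen_sigma M B {0..}
                 else if k = 1 then gen_sigma M Y UNIV else gen_sigma M E UNIV) {0, 1, 2}"

definition C2_bounded :: "(real \<Rightarrow> real) \<Rightarrow> bool" where
  "C2_bounded f \<longleftrightarrow> (\<exists>f1 f2.
      (\<forall>y. (f has_real_derivative f1 y) (at y)) \<and>
      (\<forall>y. (f1 has_real_derivative f2 y) (at y)) \<and>
      bounded (range f) \<and> bounded (range f1) \<and> bounded (range f2))"

definition cadlag_on_nonneg :: "(real \<Rightarrow> real) \<Rightarrow> bool" where
  "cadlag_on_nonneg f \<longleftrightarrow>
     (\<forall>t\<ge>0. continuous (at_right t) f \<and> (t > 0 \<longrightarrow> (\<exists>L. (f \<longlongrightarrow> L) (at_left t))))"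

definition noise_filtration ::
  "'a measure \<Rightarrow> (real \<Rightarrow> 'a \<Rightarrow> real) \<Rightarrow> (nat \<Rightarrow> 'a \<Rightarrow> real) \<Rightarrow> (nat \<Rightarrow> 'a \<Rightarrow> real)
     \<Rightarrow> real \<Rightarrow> 'a measure" where
  "noise_filtration M B Y E t = sigma (space M)
     (gen_sigma M (\<lambda>(k::bool, s). if k then B s else jump_part E Y s) (UNIV \<times> {0..t}))"

definition adapted_completed ::
  "'a measure \<Rightarrow> (real \<Rightarrow> 'a measure) \<Rightarrow> (real \<Rightarrow> 'a \<Rightarrow> real) \<Rightarrow> bool" where
  "adapted_completed M F X \<longleftrightarrow>
     (\<forall>t\<ge>0. \<exists>Z \<in> borel_measurable (F t). AE \<omega> in M. X t \<omega> = Z \<omega>)"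

definition ito_riemann_sum ::
  "(real \<Rightarrow> real) \<Rightarrow> (real \<Rightarrow> 'a \<Rightarrow> real) \<Rightarrow> (real \<Rightarrow> 'a \<Rightarrow> real) \<Rightarrow> real \<Rightarrow> nat \<Rightarrow> 'a \<Rightarrow> real" where
  "ito_riemann_sum \<sigma> X B t n \<omega> =
     (\<Sum>k<2^n. \<sigma> (X (real k * t / 2^n) \<omega>) *
                 (B (real (Suc k) * t / 2^n) \<omega> - B (real k * t / 2^n) \<omega>))"

text \<open>The Ito integral is characterised as the limit in probability of the left-point
  Riemann sums (valid for cadlag adapted integrands, Protter Thm II.21).\<close>
definition sde_solution ::
  "'a measure \<Rightarrow> (real \<Rightarrow> 'a \<Rightarrow> real) \<Rightarrow> (nat \<Rightarrow> 'a \<Rightarrow> real) \<Rightarrow> (nat \<Rightarrow> 'a \<Rightarrow> real)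
     \<Rightarrow> (real \<Rightarrow> real) \<Rightarrow> (real \<Rightarrow> real) \<Rightarrow> real \<Rightarrow> (real \<Rightarrow> 'a \<Rightarrow> real) \<Rightarrow> bool" where
  "sde_solution M B Y E \<sigma> b x X \<longleftrightarrow>
     (\<forall>t. X t \<in> borel_measurable M) \<and>
     (\<forall>\<omega>\<in>space M. cadlag_on_nonneg (\<lambda>t. X t \<omega>)) \<and>
     adapted_completed M (noise_filtration M B Y E) X \<and>
     (\<forall>t\<ge>0. \<forall>\<epsilon>>0.
        (\<lambda>n. measure M {\<omega>\<in>space M.
            \<bar>ito_riemann_sum \<sigma> X B t n \<omega> -
             (X t \<omega> - x - (LINT s:{0..t}|lborel. b (X s \<omega>)) - jump_part E Y t \<omega>)\<bar> > \<epsilon>})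
        \<longlonglongrightarrow> 0)"

end

theory Submission
  imports Defs
begin

text \<open>Write \<open>X\<^sub>t - x\<close> as the Ito integral plus the drift plus the compound Poisson part. The drift is
  at most \<open>\<parallel>b\<parallel>\<^sub>\<infinity> t\<close>, negligible once \<open>r / t\<close> is large. The Ito integral is a limit in probability of
  left-point Riemann sums; since each Brownian increment is independent of the past of the noise,
  these sums have the exponential moments of a centred Gaussian of variance \<open>\<parallel>\<sigma>\<parallel>\<^sub>\<infinity>\<^sup>2 t\<close>, which gives
  a Gaussian tail \<open>exp (- c r\<^sup>2 / t)\<close>. The jump part is a sum of at most \<open>n\<close> Gaussian amplitudes,
  hence Gaussian of variance at most \<open>n \<beta>\<close>, unless more than \<open>n\<close> jumps occur before \<open>t\<close>, which has
  probability at most \<open>(e l t / (n + 1))\<^sup>n\<^sup>+\<^sup>1\<close>. The choice \<open>n \<approx> r / \<surd>(ln (r / t))\<close> balances the two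
  and leaves \<open>exp (- c r \<surd>(ln (r / t)))\<close> for every term.\<close>

section \<open>Sub-Gaussian tails\<close>

definition subgaussian :: "'a measure \<Rightarrow> real \<Rightarrow> ('a \<Rightarrow> real) \<Rightarrow> bool" where
  "subgaussian M v Z \<longleftrightarrow> Z \<in> borel_measurable M \<and>
     (\<forall>\<theta>. (\<integral>\<^sup>+\<omega>. ennreal (exp (\<theta> * Z \<omega>)) \<partial>M) \<le> ennreal (exp (\<theta>\<^sup>2 * v / 2)))"

lemma subgaussian_uminus:
  assumes "subgaussian M v Z"
  shows "subgaussian M v (\<lambda>\<omega>. - Z \<omega>)"
  unfolding subgaussian_def
proof safe
  show "(\<lambda>\<omega>. - Z \<omega>) \<in> borel_measurable M" using assms by (simp add: subgaussian_def)
  fix \<theta>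
  have "(\<integral>\<^sup>+\<omega>. ennreal (exp ((- \<theta>) * Z \<omega>)) \<partial>M) \<le> ennreal (exp ((- \<theta>)\<^sup>2 * v / 2))"
    using assms by (simp only: subgaussian_def)
  then show "(\<integral>\<^sup>+\<omega>. ennreal (exp (\<theta> * - Z \<omega>)) \<partial>M) \<le> ennreal (exp (\<theta>\<^sup>2 * v / 2))"
    by simp
qed

lemma nn_integral_density_eq_1:
  assumes "prob_space (density lborel (\<lambda>x. ennreal (f x)))" "f \<in> borel_measurable borel"
  shows "(\<integral>\<^sup>+x. ennreal (f x) \<partial>lborel) = 1"
  using prob_space.emeasure_space_1[OF assms(1)] assms(2) by (simp add: emeasure_density)

lemma nn_integral_exp_mult_normal_density:
  assumes s: "s > 0"
  shows "(\<integral>\<^sup>+u. ennreal (exp (c * u)) * ennreal (normal_density 0 s u) \<partial>lborel)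
    = ennreal (exp (c\<^sup>2 * s\<^sup>2 / 2))"
proof -
  \<comment> \<open>completing the square: the tilted density is the normal density with mean \<open>c s\<^sup>2\<close>\<close>
  have tilt: "exp (c * u) * normal_density 0 s u = exp (c\<^sup>2 * s\<^sup>2 / 2) * normal_density (c * s\<^sup>2) s u" for u
  proof -
    have "c * u + - ((u - 0)\<^sup>2) / (2 * s\<^sup>2) = c\<^sup>2 * s\<^sup>2 / 2 + - ((u - c * s\<^sup>2)\<^sup>2) / (2 * s\<^sup>2)"
      using s by (simp add: field_simps power2_eq_square)
    then show ?thesis
      unfolding normal_density_def by (simp add: exp_add[symmetric] algebra_simps)
  qed
  have "(\<integral>\<^sup>+u. ennreal (exp (c * u)) * ennreal (normal_density 0 s u) \<partial>lborel)
      = ennreal (exp (c\<^sup>2 * s\<^sup>2 / 2)) * (\<integral>\<^sup>+u. ennreal (normal_density (c * s\<^sup>2) s u) \<partial>lborel)"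
    by (subst nn_integral_cmult[symmetric]) (auto intro!: nn_integral_cong simp: ennreal_mult[symmetric] tilt)
  also have "(\<integral>\<^sup>+u. ennreal (normal_density (c * s\<^sup>2) s u) \<partial>lborel) = 1"
    using s by (intro nn_integral_density_eq_1 prob_space_normal_density) auto
  finally show ?thesis by simp
qed

lemma nn_integral_exp_mult_normal_density_le:
  assumes s: "s > 0" and v: "\<bar>v\<bar> \<le> S"
  shows "(\<integral>\<^sup>+u. ennreal (exp (\<theta> * v * u)) * ennreal (normal_density 0 s u) \<partial>lborel)
    \<le> ennreal (exp (\<theta>\<^sup>2 * S\<^sup>2 * s\<^sup>2 / 2))"
proof -
  have "v\<^sup>2 \<le> S\<^sup>2" using v abs_le_square_iff[of v S] by simp
  then have "(\<theta> * v)\<^sup>2 * s\<^sup>2 \<le> \<theta>\<^sup>2 * S\<^sup>2 * s\<^sup>2"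
    by (simp add: power_mult_distrib mult_left_mono mult_right_mono)
  then show ?thesis
    using nn_integral_exp_mult_normal_density[OF s, of "\<theta> * v"] by simp
qed

lemma (in prob_space) subgaussian_normal:
  assumes "distributed M lborel Z (normal_density 0 (sqrt v))" and v: "v > 0"
  shows "subgaussian M v Z"
  unfolding subgaussian_def
proof safe
  show "Z \<in> borel_measurable M" using assms(1) by (simp add: distributed_def)
  fix \<theta>
  have "(\<integral>\<^sup>+\<omega>. ennreal (exp (\<theta> * Z \<omega>)) \<partial>M)
      = (\<integral>\<^sup>+u. ennreal (normal_density 0 (sqrt v) u) * ennreal (exp (\<theta> * u)) \<partial>lborel)"
    by (rule distributed_nn_integral[OF assms(1), symmetric]) simp
  also have "\<dots> = ennreal (exp (\<theta>\<^sup>2 * v / 2))"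
    using nn_integral_exp_mult_normal_density[of "sqrt v" \<theta>] v by (simp add: mult.commute)
  finally show "(\<integral>\<^sup>+\<omega>. ennreal (exp (\<theta> * Z \<omega>)) \<partial>M) \<le> ennreal (exp (\<theta>\<^sup>2 * v / 2))" by simp
qed

lemma (in prob_space) subgaussian_upper_tail:
  assumes Z: "subgaussian M v Z" and v: "v > 0" and a: "a \<ge> 0"
  shows "prob {\<omega>\<in>space M. Z \<omega> > a} \<le> exp (- a\<^sup>2 / (2 * v))"
proof -
  define \<theta> where "\<theta> = a / v"
  have \<theta>: "\<theta> \<ge> 0" using a v by (simp add: \<theta>_def)
  have [measurable]: "Z \<in> borel_measurable M" using Z by (simp add: subgaussian_def)
  have "emeasure M {\<omega>\<in>space M. Z \<omega> > a} = (\<integral>\<^sup>+\<omega>. indicator {\<omega>\<in>space M. Z \<omega> > a} \<omega> \<partial>M)"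
    by simp
  also have "\<dots> \<le> (\<integral>\<^sup>+\<omega>. ennreal (exp (- \<theta> * a)) * ennreal (exp (\<theta> * Z \<omega>)) \<partial>M)"
  proof (intro nn_integral_mono)
    fix \<omega>
    have "Z \<omega> > a \<Longrightarrow> 1 \<le> exp (- \<theta> * a) * exp (\<theta> * Z \<omega>)"
      using \<theta> by (simp add: exp_add[symmetric] mult_left_mono)
    then show "indicator {\<omega>\<in>space M. Z \<omega> > a} \<omega> \<le> ennreal (exp (- \<theta> * a)) * ennreal (exp (\<theta> * Z \<omega>))"
      by (auto simp: indicator_def ennreal_mult[symmetric])
  qed
  also have "\<dots> = ennreal (exp (- \<theta> * a)) * (\<integral>\<^sup>+\<omega>. ennreal (exp (\<theta> * Z \<omega>)) \<partial>M)"
    by (intro nn_integral_cmult) simp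
  also have "\<dots> \<le> ennreal (exp (- \<theta> * a)) * ennreal (exp (\<theta>\<^sup>2 * v / 2))"
    using Z by (intro mult_left_mono) (auto simp: subgaussian_def)
  also have "- \<theta> * a + \<theta>\<^sup>2 * v / 2 = - a\<^sup>2 / (2 * v)"
    using v by (simp add: \<theta>_def field_simps power2_eq_square)
  then have "ennreal (exp (- \<theta> * a)) * ennreal (exp (\<theta>\<^sup>2 * v / 2)) = ennreal (exp (- a\<^sup>2 / (2 * v)))"
    by (simp add: ennreal_mult[symmetric] exp_add[symmetric])
  finally show ?thesis by (simp add: emeasure_eq_measure)
qed

lemma (in prob_space) subgaussian_abs_tail:
  assumes Z: "subgaussian M v Z" and v: "v > 0" and a: "a \<ge> 0"
  shows "prob {\<omega>\<in>space M. \<bar>Z \<omega>\<bar> > a} \<le> 2 * exp (- a\<^sup>2 / (2 * v))"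
proof -
  have [measurable]: "Z \<in> borel_measurable M" using Z by (simp add: subgaussian_def)
  have "{\<omega>\<in>space M. \<bar>Z \<omega>\<bar> > a} \<subseteq> {\<omega>\<in>space M. Z \<omega> > a} \<union> {\<omega>\<in>space M. - Z \<omega> > a}"
    by auto
  then have "prob {\<omega>\<in>space M. \<bar>Z \<omega>\<bar> > a} \<le> prob ({\<omega>\<in>space M. Z \<omega> > a} \<union> {\<omega>\<in>space M. - Z \<omega> > a})"
    by (intro finite_measure_mono) measurable
  also have "\<dots> \<le> prob {\<omega>\<in>space M. Z \<omega> > a} + prob {\<omega>\<in>space M. - Z \<omega> > a}"
    by (intro measure_Un_le) measurable
  also have "\<dots> \<le> exp (- a\<^sup>2 / (2 * v)) + exp (- a\<^sup>2 / (2 * v))"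
    using subgaussian_upper_tail[OF Z v a] subgaussian_upper_tail[OF subgaussian_uminus[OF Z] v a]
    by (rule add_mono)
  finally show ?thesis by simp
qed

lemma (in prob_space) subgaussian_limit_abs_tail:
  assumes R: "\<And>n. subgaussian M v (R n)" and I: "I \<in> borel_measurable M"
    and v: "v > 0" and a: "a \<ge> 0"
    and conv: "(\<lambda>n. prob {\<omega>\<in>space M. \<bar>R n \<omega> - I \<omega>\<bar> > \<epsilon>}) \<longlonglongrightarrow> 0"
  shows "prob {\<omega>\<in>space M. \<bar>I \<omega>\<bar> > a + \<epsilon>} \<le> 2 * exp (- a\<^sup>2 / (2 * v))"
proof (rule tendsto_le[OF trivial_limit_sequentially _ tendsto_const])
  have [measurable]: "R n \<in> borel_measurable M" for n using R by (simp add: subgaussian_def)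
  note [measurable] = I
  show "(\<lambda>n. 2 * exp (- a\<^sup>2 / (2 * v)) + prob {\<omega>\<in>space M. \<bar>R n \<omega> - I \<omega>\<bar> > \<epsilon>})
      \<longlonglongrightarrow> 2 * exp (- a\<^sup>2 / (2 * v))"
    using tendsto_add[OF tendsto_const conv] by simp
  show "\<forall>\<^sub>F n in sequentially. prob {\<omega>\<in>space M. \<bar>I \<omega>\<bar> > a + \<epsilon>}
      \<le> 2 * exp (- a\<^sup>2 / (2 * v)) + prob {\<omega>\<in>space M. \<bar>R n \<omega> - I \<omega>\<bar> > \<epsilon>}"
  proof (intro always_eventually allI)
    fix n
    have "{\<omega>\<in>space M. \<bar>I \<omega>\<bar> > a + \<epsilon>}
        \<subseteq> {\<omega>\<in>space M. \<bar>R n \<omega>\<bar> > a} \<union> {\<omega>\<in>space M. \<bar>R n \<omega> - I \<omega>\<bar> > \<epsilon>}"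
      by (safe; smt (verit))
    then have "prob {\<omega>\<in>space M. \<bar>I \<omega>\<bar> > a + \<epsilon>}
        \<le> prob ({\<omega>\<in>space M. \<bar>R n \<omega>\<bar> > a} \<union> {\<omega>\<in>space M. \<bar>R n \<omega> - I \<omega>\<bar> > \<epsilon>})"
      by (intro finite_measure_mono) measurable
    also have "\<dots> \<le> prob {\<omega>\<in>space M. \<bar>R n \<omega>\<bar> > a} + prob {\<omega>\<in>space M. \<bar>R n \<omega> - I \<omega>\<bar> > \<epsilon>}"
      by (intro measure_Un_le) measurable
    finally show "prob {\<omega>\<in>space M. \<bar>I \<omega>\<bar> > a + \<epsilon>}
        \<le> 2 * exp (- a\<^sup>2 / (2 * v)) + prob {\<omega>\<in>space M. \<bar>R n \<omega> - I \<omega>\<bar> > \<epsilon>}"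
      using subgaussian_abs_tail[OF R v a, of n] by linarith
  qed
qed

lemma (in prob_space) distr_pair_eq_pair_measure:
  assumes sub: "subalgebra M F" and indep: "indep_set (sets F) {D -` H \<inter> space M | H. H \<in> sets N'}"
    and P: "P \<in> measurable F N" and D: "D \<in> measurable M N'"
  shows "distr M N P \<Otimes>\<^sub>M distr M N' D = distr M (N \<Otimes>\<^sub>M N') (\<lambda>\<omega>. (P \<omega>, D \<omega>))"
proof -
  have P': "P \<in> measurable M N" using sub P by (rule measurable_from_subalg)
  have product: "emeasure M (P -` A \<inter> space M \<inter> (D -` B \<inter> space M))
      = emeasure M (P -` A \<inter> space M) * emeasure M (D -` B \<inter> space M)"
    if "A \<in> sets N" "B \<in> sets N'" for A B
  proof -
    have "P -` A \<inter> space M \<in> sets F"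
      using measurable_sets[OF P that(1)] sub by (simp add: subalgebra_def)
    moreover have "D -` B \<inter> space M \<in> {D -` H \<inter> space M | H. H \<in> sets N'}"
      using that(2) by blast
    ultimately have "prob (P -` A \<inter> space M \<inter> (D -` B \<inter> space M)) = prob (P -` A \<inter> space M) * prob (D -` B \<inter> space M)"
      by (rule indep_setD[OF indep])
    then show ?thesis by (simp add: emeasure_eq_measure ennreal_mult)
  qed
  interpret DP: prob_space "distr M N P" using P' by (rule prob_space_distr)
  interpret DD: prob_space "distr M N' D" using D by (rule prob_space_distr)
  interpret pair_prob_space "distr M N P" "distr M N' D" ..
  show ?thesis
  proof (rule pair_measure_eqI)
    show "sigma_finite_measure (distr M N P)" "sigma_finite_measure (distr M N' D)" ..
    fix A B assume A: "A \<in> sets (distr M N P)" and B: "B \<in> sets (distr M N' D)"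
    have "(\<lambda>\<omega>. (P \<omega>, D \<omega>)) -` (A \<times> B) \<inter> space M = P -` A \<inter> space M \<inter> (D -` B \<inter> space M)"
      by auto
    then show "emeasure (distr M N P) A * emeasure (distr M N' D) B
        = emeasure (distr M (N \<Otimes>\<^sub>M N') (\<lambda>\<omega>. (P \<omega>, D \<omega>))) (A \<times> B)"
      using A B P' D product by (simp add: emeasure_distr measurable_Pair)
  qed simp_all
qed

text \<open>One step of the exponential supermartingale argument: \<open>D\<close> is integrated out by Fubini on the
  joint law of \<open>(W, V)\<close> and \<open>D\<close>, which is a product measure.\<close>

lemma (in prob_space) nn_integral_mult_exp_gaussian_le:
  fixes W V D :: "'a \<Rightarrow> real"
  assumes sub: "subalgebra M F" and indep: "indep_set (sets F) {D -` H \<inter> space M | H. H \<in> sets borel}"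
    and D: "distributed M lborel D (normal_density 0 (sqrt \<Delta>))" and \<Delta>: "\<Delta> > 0"
    and [measurable]: "W \<in> borel_measurable F" "V \<in> borel_measurable F"
    and V: "\<And>\<omega>. \<omega> \<in> space M \<Longrightarrow> \<bar>V \<omega>\<bar> \<le> S"
  shows "(\<integral>\<^sup>+\<omega>. ennreal (W \<omega>) * ennreal (exp (\<theta> * V \<omega> * D \<omega>)) \<partial>M)
    \<le> ennreal (exp (\<theta>\<^sup>2 * S\<^sup>2 * \<Delta> / 2)) * (\<integral>\<^sup>+\<omega>. ennreal (W \<omega>) \<partial>M)"
proof -
  define P where "P \<omega> = (W \<omega>, V \<omega>)" for \<omega>
  let ?DP = "distr M (borel \<Otimes>\<^sub>M borel) P" and ?DD = "distr M borel D"
  have PF: "P \<in> measurable F (borel \<Otimes>\<^sub>M borel)" unfolding P_def by measurable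
  have P: "random_variable (borel \<Otimes>\<^sub>M borel) P" using sub PF by (rule measurable_from_subalg)
  have [measurable]: "D \<in> borel_measurable M" using D by (simp add: distributed_def)
  have joint: "?DP \<Otimes>\<^sub>M ?DD = distr M ((borel \<Otimes>\<^sub>M borel) \<Otimes>\<^sub>M borel) (\<lambda>\<omega>. (P \<omega>, D \<omega>))"
    using sub indep PF by (rule distr_pair_eq_pair_measure) simp
  interpret DD: prob_space ?DD by (rule prob_space_distr) simp
  interpret DP: prob_space ?DP by (rule prob_space_distr[OF P])
  interpret pair_prob_space ?DP ?DD ..
  have DD_eq: "?DD = density lborel (\<lambda>x. ennreal (normal_density 0 (sqrt \<Delta>) x))"
  proof -
    have "?DD = distr M lborel D" by (rule distr_cong) auto
    then show ?thesis using D by (simp add: distributed_def)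
  qed
  define h where "h z = ennreal (fst (fst z)) * ennreal (exp (\<theta> * snd (fst z) * snd z))"
    for z :: "(real \<times> real) \<times> real"
  have [measurable]: "h \<in> borel_measurable ((borel \<Otimes>\<^sub>M borel) \<Otimes>\<^sub>M borel)"
    unfolding h_def by measurable
  have inner: "(\<integral>\<^sup>+d. h (p, d) \<partial>?DD) \<le> ennreal (fst p) * ennreal (exp (\<theta>\<^sup>2 * S\<^sup>2 * \<Delta> / 2))"
    if "\<bar>snd p\<bar> \<le> S" for p
  proof -
    have "(\<integral>\<^sup>+d. h (p, d) \<partial>?DD) = (\<integral>\<^sup>+d. ennreal (normal_density 0 (sqrt \<Delta>) d) * h (p, d) \<partial>lborel)"
      unfolding DD_eq by (subst nn_integral_density) (auto simp: h_def)
    also have "\<dots> = (\<integral>\<^sup>+d. ennreal (fst p) * (ennreal (exp ((\<theta> * snd p) * d)) * ennreal (normal_density 0 (sqrt \<Delta>) d)) \<partial>lborel)"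
      by (intro nn_integral_cong) (simp add: h_def mult_ac)
    also have "\<dots> = ennreal (fst p) * (\<integral>\<^sup>+d. ennreal (exp ((\<theta> * snd p) * d)) * ennreal (normal_density 0 (sqrt \<Delta>) d) \<partial>lborel)"
      by (rule nn_integral_cmult) simp
    also have "\<dots> \<le> ennreal (fst p) * ennreal (exp (\<theta>\<^sup>2 * S\<^sup>2 * (sqrt \<Delta>)\<^sup>2 / 2))"
      using \<Delta> that by (intro mult_left_mono nn_integral_exp_mult_normal_density_le) auto
    finally show ?thesis using \<Delta> by simp
  qed
  have "(\<integral>\<^sup>+\<omega>. ennreal (W \<omega>) * ennreal (exp (\<theta> * V \<omega> * D \<omega>)) \<partial>M) = (\<integral>\<^sup>+\<omega>. h (P \<omega>, D \<omega>) \<partial>M)"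
    by (simp add: h_def P_def)
  also have "\<dots> = (\<integral>\<^sup>+z. h z \<partial>(?DP \<Otimes>\<^sub>M ?DD))"
  proof -
    have "(\<lambda>\<omega>. (P \<omega>, D \<omega>)) \<in> measurable M ((borel \<Otimes>\<^sub>M borel) \<Otimes>\<^sub>M borel)"
      using P by (rule measurable_Pair) simp
    then show ?thesis unfolding joint by (rule nn_integral_distr[symmetric]) simp
  qed
  also have "\<dots> = (\<integral>\<^sup>+p. \<integral>\<^sup>+d. h (p, d) \<partial>?DD \<partial>?DP)"
    by (rule DD.nn_integral_fst[symmetric]) simp
  also have "\<dots> \<le> (\<integral>\<^sup>+p. ennreal (fst p) * ennreal (exp (\<theta>\<^sup>2 * S\<^sup>2 * \<Delta> / 2)) \<partial>?DP)"
  proof (rule nn_integral_mono_AE)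
    have "AE p in ?DP. \<bar>snd p\<bar> \<le> S"
      using P V by (subst AE_distr_iff) (auto simp: P_def)
    then show "AE p in ?DP. (\<integral>\<^sup>+d. h (p, d) \<partial>?DD) \<le> ennreal (fst p) * ennreal (exp (\<theta>\<^sup>2 * S\<^sup>2 * \<Delta> / 2))"
      by eventually_elim (rule inner)
  qed
  also have "\<dots> = ennreal (exp (\<theta>\<^sup>2 * S\<^sup>2 * \<Delta> / 2)) * (\<integral>\<^sup>+p. ennreal (fst p) \<partial>?DP)"
    by (subst nn_integral_multc) (auto simp: mult.commute)
  also have "(\<integral>\<^sup>+p. ennreal (fst p) \<partial>?DP) = (\<integral>\<^sup>+\<omega>. ennreal (W \<omega>) \<partial>M)"
    using P by (subst nn_integral_distr) (auto simp: P_def)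
  finally show ?thesis .
qed
section \<open>Tails of the compound Poisson part\<close>

lemma arrival_time_measurable[measurable]:
  assumes [measurable]: "\<And>i. E i \<in> borel_measurable N"
  shows "arrival_time E i \<in> borel_measurable N"
  unfolding arrival_time_def[abs_def] by measurable

lemma jump_part_measurable:
  assumes [measurable]: "\<And>i. Y i \<in> borel_measurable N" "\<And>i. E i \<in> borel_measurable N"
  shows "jump_part E Y t \<in> borel_measurable N"
proof -
  \<comment> \<open>\<open>f m\<close> agrees with \<open>jump_part\<close> eventually in \<open>m\<close> if only finitely many arrivals occur
    before \<open>t\<close>, and both are \<open>0\<close> otherwise\<close>
  define f where "f m \<omega> = (if \<exists>m. \<forall>i. arrival_time E i \<omega> \<le> t \<longrightarrow> i < m
     then \<Sum>i<m. if arrival_time E i \<omega> \<le> t then Y i \<omega> else 0 else 0)" for m \<omega>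
  have [measurable]: "f m \<in> borel_measurable N" for m
    unfolding f_def by measurable
  show ?thesis
  proof (rule borel_measurable_LIMSEQ_real)
    fix \<omega>
    let ?S = "{i. arrival_time E i \<omega> \<le> t}"
    show "(\<lambda>m. f m \<omega>) \<longlonglongrightarrow> jump_part E Y t \<omega>"
    proof (cases "\<exists>m. \<forall>i. arrival_time E i \<omega> \<le> t \<longrightarrow> i < m")
      case True
      then obtain m0 where m0: "\<forall>i. arrival_time E i \<omega> \<le> t \<longrightarrow> i < m0" by blast
      have "f m \<omega> = jump_part E Y t \<omega>" if "m \<ge> m0" for m
      proof -
        have "f m \<omega> = (\<Sum>i\<in>{..<m} \<inter> ?S. Y i \<omega>)"
          using True by (simp add: f_def sum.inter_restrict)
        also have "{..<m} \<inter> ?S = ?S" using m0 that by auto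
        finally show ?thesis by (simp add: jump_part_def)
      qed
      then show ?thesis
        by (intro tendsto_eventually) (auto simp: eventually_sequentially)
    next
      case False
      then have "infinite ?S"
        by (auto simp: finite_nat_set_iff_bounded)
      moreover have "f m \<omega> = 0" for m using False unfolding f_def by meson
      ultimately show ?thesis by (simp add: jump_part_def)
    qed
  qed simp
qed

lemma arrival_time_mono:
  assumes pos: "\<forall>i. E i \<omega> > (0::real)" and "i \<le> j"
  shows "arrival_time E i \<omega> \<le> arrival_time E j \<omega>"
proof -
  have "arrival_time E k \<omega> \<le> arrival_time E (Suc k) \<omega>" for k
    using pos[rule_format, of "Suc k"] by (simp add: arrival_time_def)
  then show ?thesis using \<open>i \<le> j\<close> by (rule lift_Suc_mono_le)
qed

lemma jump_part_eq_partial_sum: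
  assumes pos: "\<forall>i. E i \<omega> > (0::real)" and late: "t < arrival_time E n \<omega>"
  shows "\<exists>m\<le>n. jump_part E Y t \<omega> = (\<Sum>i<m. Y i \<omega>)"
proof -
  define m where "m = (LEAST i. t < arrival_time E i \<omega>)"
  have "m \<le> n" unfolding m_def using late by (rule Least_le)
  have "t < arrival_time E m \<omega>" unfolding m_def using late by (rule LeastI)
  have "{i. arrival_time E i \<omega> \<le> t} = {..<m}"
  proof (intro set_eqI iffI)
    fix i assume "i \<in> {i. arrival_time E i \<omega> \<le> t}"
    then show "i \<in> {..<m}"
      using arrival_time_mono[of E \<omega> m i] pos \<open>t < arrival_time E m \<omega>\<close> by force
  next
    fix i assume "i \<in> {..<m}"
    then show "i \<in> {i. arrival_time E i \<omega> \<le> t}"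
      unfolding m_def by (auto dest: not_less_Least)
  qed
  then show ?thesis using \<open>m \<le> n\<close> unfolding jump_part_def by auto
qed

lemma nn_integral_exp_mult_exponential_density:
  assumes l: "l > 0" and \<theta>: "\<theta> \<ge> 0"
  shows "(\<integral>\<^sup>+x. ennreal (exp (- \<theta> * x)) * ennreal (exponential_density l x) \<partial>lborel)
    = ennreal (l / (l + \<theta>))"
proof -
  have tilt: "exp (- (\<theta> * x)) * exponential_density l x = l / (l + \<theta>) * exponential_density (l + \<theta>) x" for x
  proof -
    have "exp (- (\<theta> * x)) * exp (- x * l) = exp (- x * (l + \<theta>))"
      by (simp add: exp_add[symmetric] algebra_simps)
    then show ?thesis using l \<theta> unfolding exponential_density_def by (auto simp: field_simps)
  qed
  have "(\<integral>\<^sup>+x. ennreal (exp (- \<theta> * x)) * ennreal (exponential_density l x) \<partial>lborel)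
      = ennreal (l / (l + \<theta>)) * (\<integral>\<^sup>+x. ennreal (exponential_density (l + \<theta>) x) \<partial>lborel)"
    using l \<theta> by (subst nn_integral_cmult[symmetric])
      (auto intro!: nn_integral_cong simp: ennreal_mult[symmetric] tilt exponential_density_nonneg)
  also have "(\<integral>\<^sup>+x. ennreal (exponential_density (l + \<theta>) x) \<partial>lborel) = 1"
    using l \<theta> by (intro nn_integral_density_eq_1 prob_space_exponential_density) auto
  finally show ?thesis by simp
qed

context prob_space
begin

lemma AE_exponential_pos:
  assumes X: "distributed M lborel X (exponential_density l)" and l: "l > 0"
  shows "AE \<omega> in M. X \<omega> > 0"
proof -
  have [measurable]: "X \<in> borel_measurable M" using X by (simp add: distributed_def)
  have "prob {\<omega>\<in>space M. X \<omega> \<le> 0} = 0"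
    using exponential_distributedD_le[OF X _ l, of 0] by simp
  then have "{\<omega>\<in>space M. X \<omega> \<le> 0} \<in> null_sets M"
    by (simp add: null_sets_def emeasure_eq_measure)
  then show ?thesis by (rule AE_I') auto
qed

lemma prob_arrival_time_le:
  assumes I: "indep_vars (\<lambda>_. borel) E UNIV"
    and D: "\<And>i. distributed M lborel (E i) (exponential_density l)" and l: "l > 0" and \<theta>: "\<theta> \<ge> 0"
  shows "prob {\<omega>\<in>space M. arrival_time E n \<omega> \<le> t} \<le> exp (\<theta> * t) * (l / (l + \<theta>)) ^ Suc n"
proof -
  have [measurable]: "E i \<in> borel_measurable M" for i using D[of i] by (simp add: distributed_def)
  have laplace: "(\<integral>\<^sup>+\<omega>. ennreal (exp (- \<theta> * E i \<omega>)) \<partial>M) = ennreal (l / (l + \<theta>))" for i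
    using distributed_nn_integral[OF D[of i], of "\<lambda>x. ennreal (exp (- \<theta> * x))"]
      nn_integral_exp_mult_exponential_density[OF l \<theta>]
    by (simp add: mult.commute)
  have "indep_vars (\<lambda>_. borel) (\<lambda>i \<omega>. ennreal (exp (- \<theta> * E i \<omega>))) {..n}"
    by (rule indep_vars_compose2[OF indep_vars_subset[OF I]]) auto
  then have "(\<integral>\<^sup>+\<omega>. (\<Prod>i\<le>n. ennreal (exp (- \<theta> * E i \<omega>))) \<partial>M)
      = (\<Prod>i\<le>n. \<integral>\<^sup>+\<omega>. ennreal (exp (- \<theta> * E i \<omega>)) \<partial>M)"
    by (intro indep_vars_nn_integral) auto
  also have "\<dots> = ennreal ((l / (l + \<theta>)) ^ Suc n)"
    unfolding laplace prod_constant card_atMost using l \<theta> by (subst ennreal_power) auto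
  finally have laplace_sum: "(\<integral>\<^sup>+\<omega>. (\<Prod>i\<le>n. ennreal (exp (- \<theta> * E i \<omega>))) \<partial>M)
      = ennreal ((l / (l + \<theta>)) ^ Suc n)" .
  have "emeasure M {\<omega>\<in>space M. arrival_time E n \<omega> \<le> t} = (\<integral>\<^sup>+\<omega>. indicator {\<omega>\<in>space M. arrival_time E n \<omega> \<le> t} \<omega> \<partial>M)"
    by simp
  also have "\<dots> \<le> (\<integral>\<^sup>+\<omega>. ennreal (exp (\<theta> * t)) * (\<Prod>i\<le>n. ennreal (exp (- \<theta> * E i \<omega>))) \<partial>M)"
  proof (intro nn_integral_mono)
    fix \<omega>
    have "(\<Prod>i\<le>n. ennreal (exp (- \<theta> * E i \<omega>))) = ennreal (exp (- \<theta> * arrival_time E n \<omega>))"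
      by (simp add: prod_ennreal exp_sum[symmetric] arrival_time_def sum_distrib_left sum_negf)
    moreover have "arrival_time E n \<omega> \<le> t \<Longrightarrow> 1 \<le> exp (\<theta> * t) * exp (- \<theta> * arrival_time E n \<omega>)"
      using \<theta> by (simp add: exp_add[symmetric] mult_left_mono)
    ultimately show "indicator {\<omega>\<in>space M. arrival_time E n \<omega> \<le> t} \<omega>
        \<le> ennreal (exp (\<theta> * t)) * (\<Prod>i\<le>n. ennreal (exp (- \<theta> * E i \<omega>)))"
      by (auto simp: indicator_def ennreal_mult[symmetric])
  qed
  also have "\<dots> = ennreal (exp (\<theta> * t)) * (\<integral>\<^sup>+\<omega>. (\<Prod>i\<le>n. ennreal (exp (- \<theta> * E i \<omega>))) \<partial>M)"
    by (rule nn_integral_cmult) simp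
  also have "\<dots> = ennreal (exp (\<theta> * t) * (l / (l + \<theta>)) ^ Suc n)"
    unfolding laplace_sum using l \<theta> by (simp add: ennreal_mult del: power_Suc)
  finally show ?thesis
    using l \<theta> by (simp add: emeasure_eq_measure ennreal_le_iff del: power_Suc)
qed

lemma prob_arrival_time_le_poisson:
  assumes I: "indep_vars (\<lambda>_. borel) E UNIV"
    and D: "\<And>i. distributed M lborel (E i) (exponential_density l)" and l: "l > 0" and t: "t > 0"
  shows "prob {\<omega>\<in>space M. arrival_time E n \<omega> \<le> t} \<le> (exp 1 * l * t / Suc n) ^ Suc n"
proof -
  define \<theta> where "\<theta> = Suc n / t"
  have \<theta>: "\<theta> > 0" using t by (simp add: \<theta>_def)
  have "prob {\<omega>\<in>space M. arrival_time E n \<omega> \<le> t} \<le> exp (\<theta> * t) * (l / (l + \<theta>)) ^ Suc n"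
    using prob_arrival_time_le[OF I D l] \<theta> by simp
  also have "\<dots> \<le> exp 1 ^ Suc n * (l / \<theta>) ^ Suc n"
  proof (intro mult_mono power_mono)
    show "exp (\<theta> * t) \<le> exp 1 ^ Suc n"
      using t by (simp add: \<theta>_def exp_of_nat_mult[symmetric] exp_add add.commute)
    show "l / (l + \<theta>) \<le> l / \<theta>" using l \<theta> by (intro divide_left_mono) auto
  qed (use l \<theta> in auto)
  also have "\<dots> = (exp 1 * l * t / Suc n) ^ Suc n"
    using t by (simp add: \<theta>_def power_mult_distrib[symmetric] mult.assoc)
  finally show ?thesis .
qed

lemma prob_abs_sum_normal_gt:
  fixes m :: nat
  assumes I: "indep_vars (\<lambda>_. borel) Y UNIV" and \<beta>: "\<beta> > 0"
    and D: "\<And>i. distributed M lborel (Y i) (normal_density 0 (sqrt \<beta>))" and m: "m > 0" and a: "a \<ge> 0"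
  shows "prob {\<omega>\<in>space M. \<bar>\<Sum>i<m. Y i \<omega>\<bar> > a} \<le> 2 * exp (- a\<^sup>2 / (2 * (real m * \<beta>)))"
proof (rule subgaussian_abs_tail[OF subgaussian_normal _ a])
  have "distributed M lborel (\<lambda>\<omega>. \<Sum>i<m. Y i \<omega>) (normal_density (\<Sum>i<m. 0) (sqrt (\<Sum>i<m. (sqrt \<beta>)\<^sup>2)))"
    using m \<beta> D indep_vars_subset[OF I] by (intro sum_indep_normal) auto
  then show "distributed M lborel (\<lambda>\<omega>. \<Sum>i<m. Y i \<omega>) (normal_density 0 (sqrt (real m * \<beta>)))"
    using \<beta> by simp
qed (use m \<beta> in auto)

lemma prob_abs_jump_part_gt_le:
  assumes [measurable]: "\<And>i. Y i \<in> borel_measurable M" "\<And>i. E i \<in> borel_measurable M"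
    and pos: "AE \<omega> in M. \<forall>i. E i \<omega> > 0" and a: "a \<ge> 0"
  shows "prob {\<omega>\<in>space M. \<bar>jump_part E Y t \<omega>\<bar> > a}
    \<le> prob {\<omega>\<in>space M. arrival_time E n \<omega> \<le> t} + (\<Sum>m\<in>{1..n}. prob {\<omega>\<in>space M. \<bar>\<Sum>i<m. Y i \<omega>\<bar> > a})"
proof -
  let ?T = "{\<omega>\<in>space M. arrival_time E n \<omega> \<le> t}"
  let ?S = "\<lambda>m. {\<omega>\<in>space M. \<bar>\<Sum>i<m. Y i \<omega>\<bar> > a}"
  have "prob {\<omega>\<in>space M. \<bar>jump_part E Y t \<omega>\<bar> > a} \<le> prob (?T \<union> (\<Union>m\<in>{1..n}. ?S m))"
  proof (rule finite_measure_mono_AE)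
    show "AE \<omega> in M. \<omega> \<in> {\<omega>\<in>space M. \<bar>jump_part E Y t \<omega>\<bar> > a} \<longrightarrow> \<omega> \<in> ?T \<union> (\<Union>m\<in>{1..n}. ?S m)"
      using pos
    proof eventually_elim
      case (elim \<omega>)
      show ?case
      proof (cases "arrival_time E n \<omega> \<le> t")
        case False
        then obtain m where "m \<le> n" "jump_part E Y t \<omega> = (\<Sum>i<m. Y i \<omega>)"
          using jump_part_eq_partial_sum[of E \<omega> t n Y] elim by fastforce
        moreover have "(\<Sum>i<0. Y i \<omega>) = 0" by simp
        ultimately show ?thesis using a by (cases "m = 0") auto
      qed simp
    qed
  qed measurable
  also have "\<dots> \<le> prob ?T + prob (\<Union>m\<in>{1..n}. ?S m)"
    by (intro measure_Un_le) measurable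
  also have "prob (\<Union>m\<in>{1..n}. ?S m) \<le> (\<Sum>m\<in>{1..n}. prob (?S m))"
    by (intro measure_UNION_le) auto
  finally show ?thesis by simp
qed

lemma jump_part_tail:
  assumes IY: "indep_vars (\<lambda>_. borel) Y UNIV" and DY: "\<And>i. distributed M lborel (Y i) (normal_density 0 (sqrt \<beta>))"
    and IE: "indep_vars (\<lambda>_. borel) E UNIV" and DE: "\<And>i. distributed M lborel (E i) (exponential_density l)"
    and l: "l > 0" and \<beta>: "\<beta> > 0" and a: "a \<ge> 0" and t: "t > 0"
  shows "prob {\<omega>\<in>space M. \<bar>jump_part E Y t \<omega>\<bar> > a}
    \<le> (exp 1 * l * t / Suc n) ^ Suc n + n * (2 * exp (- a\<^sup>2 / (2 * (real n * \<beta>))))"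
proof -
  have "Y i \<in> borel_measurable M" "E i \<in> borel_measurable M" for i
    using DY[of i] DE[of i] by (auto simp: distributed_def)
  moreover have "AE \<omega> in M. \<forall>i. E i \<omega> > 0"
    using AE_exponential_pos[OF DE l] by (simp add: AE_all_countable)
  moreover have "prob {\<omega>\<in>space M. \<bar>\<Sum>i<m. Y i \<omega>\<bar> > a} \<le> 2 * exp (- a\<^sup>2 / (2 * (real n * \<beta>)))"
    if "m \<in> {1..n}" for m
  proof -
    have "a\<^sup>2 / (2 * (real n * \<beta>)) \<le> a\<^sup>2 / (2 * (real m * \<beta>))"
      using that \<beta> by (intro divide_left_mono mult_left_mono mult_right_mono) auto
    then have "exp (- a\<^sup>2 / (2 * (real m * \<beta>))) \<le> exp (- a\<^sup>2 / (2 * (real n * \<beta>)))"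
      by simp
    moreover have "prob {\<omega>\<in>space M. \<bar>\<Sum>i<m. Y i \<omega>\<bar> > a} \<le> 2 * exp (- a\<^sup>2 / (2 * (real m * \<beta>)))"
      using that by (intro prob_abs_sum_normal_gt[OF IY \<beta> DY _ a]) auto
    ultimately show ?thesis by linarith
  qed
  ultimately have "prob {\<omega>\<in>space M. \<bar>jump_part E Y t \<omega>\<bar> > a}
      \<le> prob {\<omega>\<in>space M. arrival_time E n \<omega> \<le> t} + (\<Sum>m\<in>{1..n}. 2 * exp (- a\<^sup>2 / (2 * (real n * \<beta>))))"
    using prob_abs_jump_part_gt_le[of Y E a t n] a by (smt (verit, ccfv_SIG) sum_mono)
  moreover have "(\<Sum>m\<in>{1..n}. 2 * exp (- a\<^sup>2 / (2 * (real n * \<beta>)))) = n * (2 * exp (- a\<^sup>2 / (2 * (real n * \<beta>))))"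
    by simp
  ultimately show ?thesis
    using prob_arrival_time_le_poisson[OF IE DE l t, of n] by linarith
qed

end

section \<open>Brownian increments are independent of the past of the noise\<close>

lemma Int_stable_vimage_sets: "Int_stable {f -` A \<inter> \<Omega> | A. A \<in> sets N}"
proof (safe intro!: Int_stableI)
  fix A B assume "A \<in> sets N" "B \<in> sets N"
  then show "\<exists>C. (f -` A \<inter> \<Omega>) \<inter> (f -` B \<inter> \<Omega>) = f -` C \<inter> \<Omega> \<and> C \<in> sets N"
    by (intro exI[of _ "A \<inter> B"]) auto
qed

lemma sigma_sets_Int_closed:
  assumes "G \<subseteq> Pow \<Omega>" "a \<in> sigma_sets \<Omega> G" "b \<in> sigma_sets \<Omega> G"
  shows "a \<inter> b \<in> sigma_sets \<Omega> G"
proof -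
  interpret sigma_algebra \<Omega> "sigma_sets \<Omega> G" using assms(1) by (rule sigma_algebra_sigma_sets)
  show ?thesis using assms(2,3) by (rule Int)
qed

lemma Int_stable_sigma_sets: "G \<subseteq> Pow \<Omega> \<Longrightarrow> Int_stable (sigma_sets \<Omega> G)"
  by (auto intro!: Int_stableI sigma_sets_Int_closed)

lemma measurable_sigma_of_vimage:
  assumes G: "G \<subseteq> Pow \<Omega>" and vimage: "\<And>A. A \<in> sets borel \<Longrightarrow> f -` A \<inter> \<Omega> \<in> sigma_sets \<Omega> G"
  shows "f \<in> borel_measurable (sigma \<Omega> G)"
  using G vimage by (intro measurableI) (auto simp: sets_measure_of space_measure_of_conv)

lemma gen_sigma_subset_Pow: "gen_sigma M Z I \<subseteq> Pow (space M)"
  unfolding gen_sigma_def by (auto dest: sigma_sets_into_sp[rotated])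

lemma gen_sigma_mono: "I \<subseteq> I' \<Longrightarrow> gen_sigma M Z I \<subseteq> gen_sigma M Z I'"
  unfolding gen_sigma_def by (intro sigma_sets_mono' UN_mono) auto

lemma space_sigma_gen_sigma[simp]: "space (sigma (space M) (gen_sigma M Z I)) = space M"
  by (rule space_measure_of_conv)

lemma sets_sigma_gen_sigma[simp]: "sets (sigma (space M) (gen_sigma M Z I)) = gen_sigma M Z I"
proof -
  have "sets (sigma (space M) (gen_sigma M Z I)) = sigma_sets (space M) (gen_sigma M Z I)"
    using gen_sigma_subset_Pow by (rule sets_measure_of)
  also have "\<dots> = gen_sigma M Z I"
    unfolding gen_sigma_def by (rule sigma_sets_sigma_sets_eq) auto
  finally show ?thesis .
qed

lemma measurable_gen_sigma:
  assumes "i \<in> I" "gen_sigma M Z I \<subseteq> G" "G \<subseteq> Pow (space M)"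
  shows "Z i \<in> borel_measurable (sigma (space M) G)"
proof (rule measurable_sigma_of_vimage[OF assms(3)])
  fix A :: "real set" assume "A \<in> sets borel"
  then have "Z i -` A \<inter> space M \<in> gen_sigma M Z I"
    using assms(1) unfolding gen_sigma_def by blast
  then show "Z i -` A \<inter> space M \<in> sigma_sets (space M) G"
    using assms(2) by blast
qed

lemma increment_vimage_gen_sigma:
  assumes "0 \<le> s" "0 \<le> u" and G: "G \<in> {(\<lambda>\<omega>. B u \<omega> - B s \<omega>) -` H \<inter> space M | H. H \<in> sets borel}"
  shows "G \<in> gen_sigma M B {0..}"
proof -
  have "B r \<in> borel_measurable (sigma (space M) (gen_sigma M B {0..}))" if "r \<ge> 0" for r
    using that gen_sigma_subset_Pow[of M B "{0..}"] by (intro measurable_gen_sigma[of r "{0..}"]) auto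
  then have "B u \<in> borel_measurable (sigma (space M) (gen_sigma M B {0..}))"
    "B s \<in> borel_measurable (sigma (space M) (gen_sigma M B {0..}))"
    using assms(1,2) by auto
  then have "(\<lambda>\<omega>. B u \<omega> - B s \<omega>) \<in> borel_measurable (sigma (space M) (gen_sigma M B {0..}))"
    by measurable
  then show ?thesis
    using G by (auto dest: measurable_sets)
qed

lemma gen_sigma_subset_sigma_sets:
  assumes G: "G \<subseteq> Pow (space M)" and Z: "\<And>i. i \<in> I \<Longrightarrow> Z i \<in> borel_measurable (sigma (space M) G)"
  shows "gen_sigma M Z I \<subseteq> sigma_sets (space M) G"
  unfolding gen_sigma_def
proof (rule sigma_sets_mono, safe)
  fix i and A :: "real set" assume "i \<in> I" "A \<in> sets borel"
  then show "Z i -` A \<inter> space M \<in> sigma_sets (space M) G"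
    using measurable_sets[OF Z] G by (simp add: sets_measure_of space_measure_of_conv)
qed

lemma increasing_grid_through:
  fixes J :: "real set"
  assumes J: "finite J" "J \<subseteq> {0..s}" and s: "0 \<le> s" "s < u"
  obtains N ts where "N \<ge> 1" "ts 0 = 0" "ts (N - 1) = s" "ts N = u" "\<And>i. i < N \<Longrightarrow> ts i < ts (Suc i)"
    "\<And>r. r \<in> J \<Longrightarrow> \<exists>j<N. ts j = r"
proof -
  define L where "L = sorted_list_of_set ({0, s} \<union> J)"
  define N where "N = length L"
  define ts where "ts i = (if i < N then L ! i else u + real (i - N))" for i
  have setL: "set L = {0, s} \<union> J" unfolding L_def using J by (intro set_sorted_list_of_set) simp
  have strict: "sorted_wrt (<) L" unfolding L_def by (rule strict_sorted_list_of_set)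
  have in_range: "0 \<le> L ! i \<and> L ! i \<le> s" if "i < N" for i
    using nth_mem[of i L] that setL J s unfolding N_def by auto
  have N: "N \<ge> 1" using setL unfolding N_def by (cases L) auto
  obtain k0 ks where k0: "k0 < N" "L ! k0 = 0" and ks: "ks < N" "L ! ks = s"
    using setL unfolding N_def by (metis UnI1 in_set_conv_nth insertI1 insert_commute)
  have mono: "L ! i \<le> L ! j" if "i \<le> j" "j < N" for i j
    using strict that unfolding N_def by (auto simp: sorted_wrt_iff_nth_less le_less)
  have "ts 0 = 0" using mono[of 0 k0] in_range[of 0] k0 N unfolding ts_def by auto
  moreover have "ts (N - 1) = s" using mono[of ks "N - 1"] in_range[of "N - 1"] ks N unfolding ts_def by auto
  moreover have "ts N = u" unfolding ts_def by simp
  moreover have "ts i < ts (Suc i)" if "i < N" for i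
  proof (cases "Suc i < N")
    case True
    then show ?thesis using strict unfolding ts_def N_def by (auto simp: sorted_wrt_iff_nth_less)
  next
    case False
    then have "i = N - 1" using that by simp
    then show ?thesis using \<open>ts (N - 1) = s\<close> \<open>ts N = u\<close> s N False by (metis Suc_pred' less_le_trans zero_less_one)
  qed
  moreover have "\<exists>j<N. ts j = r" if "r \<in> J" for r
    using that setL unfolding ts_def N_def by (metis UnI2 in_set_conv_nth)
  ultimately show ?thesis using N that by blast
qed

lemma (in prob_space) brownian_increment_indep_past:
  assumes BM: "std_brownian_motion M B" and J: "finite J" "J \<subseteq> {0..s}" and s: "0 \<le> s" "s < u"
    and A: "A \<in> gen_sigma M B J"
    and G: "G \<in> {(\<lambda>\<omega>. B u \<omega> - B s \<omega>) -` H \<inter> space M | H. H \<in> sets borel}"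
  shows "prob (A \<inter> G) = prob A * prob G"
proof -
  obtain N ts where N: "N \<ge> 1" and ts: "ts 0 = 0" "ts (N - 1) = s" "ts N = u"
    and inc: "\<And>i. i < N \<Longrightarrow> ts i < ts (Suc i)" and cover: "\<And>r. r \<in> J \<Longrightarrow> \<exists>j<N. ts j = r"
    using increasing_grid_through[OF J s] by blast
  define \<Delta> where "\<Delta> i \<omega> = B (ts (Suc i)) \<omega> - B (ts i) \<omega>" for i \<omega>
  let ?vimages = "\<lambda>i. {\<Delta> i -` H \<inter> space M | H. H \<in> sets borel}"
  \<comment> \<open>\<open>A\<close> is generated by the first \<open>N - 1\<close> increments, \<open>G\<close> by the last one\<close>
  define block where "block j = (if j = (0::nat) then {..<N - 1} else {N - 1})" for j
  have "indep_vars (\<lambda>_. borel) \<Delta> {..<N}"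
    using BM ts(1) inc unfolding std_brownian_motion_def \<Delta>_def[abs_def] by auto
  then have "indep_sets (\<lambda>i. sigma_sets (space M) (?vimages i)) (\<Union>j\<in>{0, 1}. block j)"
    using N unfolding indep_vars_def block_def by (auto simp: lessThan_Suc[symmetric])
  then have blocks: "indep_sets (\<lambda>j. sigma_sets (space M) (\<Union>i\<in>block j. sigma_sets (space M) (?vimages i))) {0, 1}"
    by (rule indep_sets_collect_sigma) (auto intro: Int_stable_sigma_sets simp: disjoint_family_on_def block_def)
  let ?past = "\<Union>i\<in>block 0. sigma_sets (space M) (?vimages i)"
  have past_Pow: "?past \<subseteq> Pow (space M)"
    using sigma_sets_into_sp[of "?vimages _" "space M"] by blast
  have "A \<in> sigma_sets (space M) ?past"
  proof -
    have "B r \<in> borel_measurable (sigma (space M) ?past)" if r: "r \<in> J" for r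
    proof -
      obtain j where j: "j < N" "ts j = r" using cover[OF r] by blast
      have "\<Delta> i \<in> borel_measurable (sigma (space M) ?past)" if "i < j" for i
      proof (rule measurable_sigma_of_vimage[OF past_Pow])
        fix H :: "real set" assume "H \<in> sets borel"
        moreover have "i \<in> block 0" using that j by (simp add: block_def)
        ultimately show "\<Delta> i -` H \<inter> space M \<in> sigma_sets (space M) ?past"
          by (blast intro: sigma_sets.Basic)
      qed
      then have "(\<lambda>\<omega>. \<Sum>i<j. \<Delta> i \<omega>) \<in> borel_measurable (sigma (space M) ?past)"
        by (intro borel_measurable_sum) auto
      moreover have "(\<Sum>i<j. \<Delta> i \<omega>) = B r \<omega>" if "\<omega> \<in> space (sigma (space M) ?past)" for \<omega>
      proof -
        have "(\<Sum>i<j. \<Delta> i \<omega>) = B (ts j) \<omega> - B (ts 0) \<omega>"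
          unfolding \<Delta>_def by (rule sum_lessThan_telescope)
        then show ?thesis
          using that j ts(1) BM past_Pow by (simp add: std_brownian_motion_def space_measure_of_conv)
      qed
      ultimately show ?thesis by (rule measurable_cong[THEN iffD1, rotated])
    qed
    then have "gen_sigma M B J \<subseteq> sigma_sets (space M) ?past"
      using past_Pow by (intro gen_sigma_subset_sigma_sets)
    then show ?thesis using A sigma_sets_mono by blast
  qed
  moreover have "G \<in> sigma_sets (space M) (\<Union>i\<in>block 1. sigma_sets (space M) (?vimages i))"
  proof -
    have "\<Delta> (N - 1) = (\<lambda>\<omega>. B u \<omega> - B s \<omega>)" using N ts unfolding \<Delta>_def by auto
    then show ?thesis using G unfolding block_def by auto
  qed
  ultimately show ?thesis
    using indep_setsD[OF blocks, of "{0, 1}" "\<lambda>j. if j = 0 then A else G"] by (simp add: Int_commute)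
qed

lemma space_noise_filtration[simp]: "space (noise_filtration M B Y E s) = space M"
  by (simp add: noise_filtration_def)

lemma sets_noise_filtration:
  "sets (noise_filtration M B Y E s)
    = gen_sigma M (\<lambda>(k::bool, r). if k then B r else jump_part E Y r) (UNIV \<times> {0..s})"
  by (simp add: noise_filtration_def)

lemma measurable_noise_filtration_mono:
  assumes "f \<in> borel_measurable (noise_filtration M B Y E s)" "s \<le> s'"
  shows "f \<in> borel_measurable (noise_filtration M B Y E s')"
proof (rule measurable_from_subalg[OF _ assms(1)])
  have "sets (noise_filtration M B Y E s) \<subseteq> sets (noise_filtration M B Y E s')"
    unfolding sets_noise_filtration gen_sigma_def using assms(2) by (intro sigma_sets_mono' UN_mono) auto
  then show "subalgebra (noise_filtration M B Y E s') (noise_filtration M B Y E s)"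
    by (simp add: subalgebra_def)
qed

lemma brownian_measurable_noise_filtration:
  assumes "0 \<le> r" "r \<le> s"
  shows "B r \<in> borel_measurable (noise_filtration M B Y E s)"
proof (rule measurableI)
  fix A :: "real set" assume "A \<in> sets borel"
  then show "B r -` A \<inter> space (noise_filtration M B Y E s) \<in> sets (noise_filtration M B Y E s)"
    using assms unfolding sets_noise_filtration gen_sigma_def
    by (intro sigma_sets.Basic UN_I[of "(True, r)"]) auto
qed simp

lemma subalgebra_noise_filtration:
  assumes "\<And>r. B r \<in> borel_measurable M" "\<And>i. Y i \<in> borel_measurable M" "\<And>i. E i \<in> borel_measurable M"
  shows "subalgebra M (noise_filtration M B Y E s)"
  unfolding subalgebra_def sets_noise_filtration gen_sigma_def
  using assms jump_part_measurable[of Y M E]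
  by (auto intro!: sets.sigma_sets_subset split: if_splits)

text \<open>The \<open>\<inter>\<close>-stable generator for the \<open>\<pi>\<close>-\<open>\<lambda>\<close> argument showing that the noise filtration at time
  \<open>s\<close> is independent of later Brownian increments.\<close>

definition past_noise_events ::
  "'a measure \<Rightarrow> (real \<Rightarrow> 'a \<Rightarrow> real) \<Rightarrow> (nat \<Rightarrow> 'a \<Rightarrow> real) \<Rightarrow> (nat \<Rightarrow> 'a \<Rightarrow> real) \<Rightarrow> real \<Rightarrow> 'a set set"
where
  "past_noise_events M B Y E s = {A \<inter> C | A C. (\<exists>J. finite J \<and> J \<subseteq> {0..s} \<and> A \<in> gen_sigma M B J) \<and>
     C \<in> sigma_sets (space M) (gen_sigma M Y UNIV \<union> gen_sigma M E UNIV)}"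

lemma Int_stable_past_noise_events: "Int_stable (past_noise_events M B Y E s)"
proof (rule Int_stableI)
  let ?jumps = "gen_sigma M Y UNIV \<union> gen_sigma M E UNIV"
  have jumps_Pow: "?jumps \<subseteq> Pow (space M)"
    using gen_sigma_subset_Pow by blast
  fix a b assume a: "a \<in> past_noise_events M B Y E s" and b: "b \<in> past_noise_events M B Y E s"
  obtain A1 C1 J1 where a: "a = A1 \<inter> C1" "finite J1" "J1 \<subseteq> {0..s}" "A1 \<in> gen_sigma M B J1"
      "C1 \<in> sigma_sets (space M) ?jumps"
    using a unfolding past_noise_events_def by auto
  obtain A2 C2 J2 where b: "b = A2 \<inter> C2" "finite J2" "J2 \<subseteq> {0..s}" "A2 \<in> gen_sigma M B J2"
      "C2 \<in> sigma_sets (space M) ?jumps"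
    using b unfolding past_noise_events_def by auto
  have "A1 \<inter> A2 \<in> gen_sigma M B (J1 \<union> J2)"
    using a(4) b(4) gen_sigma_mono[of J1 "J1 \<union> J2" M B] gen_sigma_mono[of J2 "J1 \<union> J2" M B]
    unfolding gen_sigma_def by (intro sigma_sets_Int_closed) auto
  moreover have "C1 \<inter> C2 \<in> sigma_sets (space M) ?jumps"
    using jumps_Pow a(5) b(5) by (rule sigma_sets_Int_closed)
  moreover have "a \<inter> b = (A1 \<inter> A2) \<inter> (C1 \<inter> C2)" using a(1) b(1) by auto
  moreover have "finite (J1 \<union> J2)" "J1 \<union> J2 \<subseteq> {0..s}" using a b by auto
  ultimately show "a \<inter> b \<in> past_noise_events M B Y E s"
    unfolding past_noise_events_def
    by (intro CollectI exI[of _ "A1 \<inter> A2"] exI[of _ "C1 \<inter> C2"] conjI exI[of _ "J1 \<union> J2"]) auto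
qed

lemma sets_noise_filtration_subset_past_noise_events:
  "sets (noise_filtration M B Y E s) \<subseteq> sigma_sets (space M) (past_noise_events M B Y E s)"
proof -
  let ?jumps = "gen_sigma M Y UNIV \<union> gen_sigma M E UNIV"
  have jumps_Pow: "?jumps \<subseteq> Pow (space M)"
    using gen_sigma_subset_Pow by blast
  have "B r -` H \<inter> space M \<in> past_noise_events M B Y E s" if "r \<in> {0..s}" "H \<in> sets borel" for r H
  proof -
    have "B r -` H \<inter> space M \<in> gen_sigma M B {r}"
      using that unfolding gen_sigma_def by blast
    then show ?thesis
      using that sigma_sets_top[of "space M" ?jumps] unfolding past_noise_events_def
      by (intro CollectI exI[of _ "B r -` H \<inter> space M"] exI[of _ "space M"]) auto
  qed
  moreover have "jump_part E Y r -` H \<inter> space M \<in> past_noise_events M B Y E s" if "H \<in> sets borel" for r H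
  proof -
    have "Y i \<in> borel_measurable (sigma (space M) ?jumps)" "E i \<in> borel_measurable (sigma (space M) ?jumps)" for i
      using jumps_Pow by (auto intro!: measurable_gen_sigma[of i UNIV])
    then have "jump_part E Y r \<in> borel_measurable (sigma (space M) ?jumps)"
      by (rule jump_part_measurable)
    then have "jump_part E Y r -` H \<inter> space M \<in> sigma_sets (space M) ?jumps"
      using measurable_sets[of _ "sigma (space M) ?jumps" borel H] that jumps_Pow
      by (simp add: sets_measure_of space_measure_of_conv)
    moreover have "space M \<in> gen_sigma M B {}"
      unfolding gen_sigma_def by (rule sigma_sets_top)
    ultimately show ?thesis
      unfolding past_noise_events_def
      by (intro CollectI exI[of _ "space M"] exI[of _ "jump_part E Y r -` H \<inter> space M"]) auto
  qed
  ultimately show ?thesis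
    unfolding sets_noise_filtration gen_sigma_def
    by (intro sigma_sets_mono) (auto split: if_splits)
qed

context prob_space
begin

context
  fixes B :: "real \<Rightarrow> 'a \<Rightarrow> real" and Y E :: "nat \<Rightarrow> 'a \<Rightarrow> real"
  assumes BM: "std_brownian_motion M B"
    and indep_noise: "indep_sets (\<lambda>k::nat. if k = 0 then gen_sigma M B {0..}
      else if k = 1 then gen_sigma M Y UNIV else gen_sigma M E UNIV) {0, 1, 2}"
    and Y_measurable: "\<And>i. Y i \<in> borel_measurable M" and E_measurable: "\<And>i. E i \<in> borel_measurable M"
begin

lemma indep_brownian_jumps:
  assumes A: "A \<in> gen_sigma M B {0..}" and C: "C \<in> sigma_sets (space M) (gen_sigma M Y UNIV \<union> gen_sigma M E UNIV)"
  shows "prob (A \<inter> C) = prob A * prob C"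
proof -
  let ?F = "\<lambda>k::nat. if k = 0 then gen_sigma M B {0..} else if k = 1 then gen_sigma M Y UNIV else gen_sigma M E UNIV"
  define block where "block j = (if j = (0::nat) then {0::nat} else {1, 2})" for j
  have blocks: "indep_sets (\<lambda>j. sigma_sets (space M) (\<Union>k\<in>block j. ?F k)) {0, 1}"
  proof (rule indep_sets_collect_sigma)
    show "indep_sets ?F (\<Union>j\<in>{0, 1}. block j)"
      using indep_noise by (simp add: block_def insert_commute)
    show "Int_stable (?F k)" for k
      unfolding gen_sigma_def by (auto intro!: Int_stable_sigma_sets)
  qed (auto simp: disjoint_family_on_def block_def)
  have "(\<Union>k\<in>block 0. ?F k) = gen_sigma M B {0..}" "(\<Union>k\<in>block 1. ?F k) = gen_sigma M Y UNIV \<union> gen_sigma M E UNIV"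
    by (auto simp: block_def)
  then have "prob (\<Inter>j\<in>{0::nat, 1}. if j = 0 then A else C) = (\<Prod>j\<in>{0::nat, 1}. prob (if j = 0 then A else C))"
    using A C by - (rule indep_setsD[OF blocks], auto intro: sigma_sets.Basic)
  then show ?thesis by (simp add: Int_commute)
qed

lemma indep_past_noise_events_brownian_increment:
  assumes s: "0 \<le> s" "s < u"
  shows "indep_set (past_noise_events M B Y E s) {(\<lambda>\<omega>. B u \<omega> - B s \<omega>) -` H \<inter> space M | H. H \<in> sets borel}"
proof (rule indep_setI)
  have [measurable]: "B r \<in> borel_measurable M" for r using BM by (simp add: std_brownian_motion_def)
  have "gen_sigma M B J \<subseteq> events" for J
    unfolding gen_sigma_def by (intro sets.sigma_sets_subset) auto
  moreover have "sigma_sets (space M) (gen_sigma M Y UNIV \<union> gen_sigma M E UNIV) \<subseteq> events"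
    using Y_measurable E_measurable unfolding gen_sigma_def
    by (intro sets.sigma_sets_subset) (auto intro!: sets.sigma_sets_subset)
  ultimately show "past_noise_events M B Y E s \<subseteq> events"
    unfolding past_noise_events_def by blast
  show "{(\<lambda>\<omega>. B u \<omega> - B s \<omega>) -` H \<inter> space M | H. H \<in> sets borel} \<subseteq> events"
    by auto
  fix a G
  assume "a \<in> past_noise_events M B Y E s" and G: "G \<in> {(\<lambda>\<omega>. B u \<omega> - B s \<omega>) -` H \<inter> space M | H. H \<in> sets borel}"
  then obtain A C J where a: "a = A \<inter> C" and J: "finite J" "J \<subseteq> {0..s}" and A: "A \<in> gen_sigma M B J"
    and C: "C \<in> sigma_sets (space M) (gen_sigma M Y UNIV \<union> gen_sigma M E UNIV)"
    unfolding past_noise_events_def by blast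
  have "J \<subseteq> {0..}" using J by auto
  then have A': "A \<in> gen_sigma M B {0..}" using A gen_sigma_mono[of J "{0..}" M B] by blast
  have AG: "A \<inter> G \<in> gen_sigma M B {0..}"
    using A' increment_vimage_gen_sigma[OF _ _ G] s unfolding gen_sigma_def by (intro sigma_sets_Int_closed) auto
  have "prob (a \<inter> G) = prob (A \<inter> G) * prob C"
    using indep_brownian_jumps[OF AG C] by (simp add: a Int_ac)
  also have "\<dots> = prob A * prob C * prob G"
    using brownian_increment_indep_past[OF BM J s A G] by simp
  also have "prob A * prob C = prob a"
    using indep_brownian_jumps[OF A' C] by (simp add: a)
  finally show "prob (a \<inter> G) = prob a * prob G" .
qed

lemma indep_noise_filtration_brownian_increment:
  assumes "0 \<le> s" "s < u"
  shows "indep_set (sets (noise_filtration M B Y E s))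
    {(\<lambda>\<omega>. B u \<omega> - B s \<omega>) -` H \<inter> space M | H. H \<in> sets borel}"
  unfolding indep_set_def
  by (rule indep_sets_mono_sets[OF indep_set_sigma_sets[OF indep_past_noise_events_brownian_increment[OF assms]
      Int_stable_past_noise_events Int_stable_vimage_sets, unfolded indep_set_def]])
    (use sets_noise_filtration_subset_past_noise_events[of M B Y E s] in \<open>auto split: bool.split\<close>)

section \<open>Exponential moments of the Ito Riemann sums\<close>

lemma nn_integral_exp_adapted_sum_le:
  fixes Z :: "nat \<Rightarrow> 'a \<Rightarrow> real" and \<sigma> :: "real \<Rightarrow> real"
  assumes Z: "\<And>j. Z j \<in> borel_measurable (noise_filtration M B Y E (real j * h))" and h: "h > 0"
    and [measurable]: "\<sigma> \<in> borel_measurable borel" and \<sigma>_bound: "\<And>y. \<bar>\<sigma> y\<bar> \<le> S"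
  shows "(\<integral>\<^sup>+\<omega>. ennreal (exp (\<theta> * (\<Sum>j<k. \<sigma> (Z j \<omega>) * (B (real (Suc j) * h) \<omega> - B (real j * h) \<omega>)))) \<partial>M)
    \<le> ennreal (exp (\<theta>\<^sup>2 * S\<^sup>2 * (k * h) / 2))"
proof (induction k)
  case 0
  then show ?case by (simp add: emeasure_space_1)
next
  case (Suc k)
  define R where "R \<omega> = (\<Sum>j<k. \<sigma> (Z j \<omega>) * (B (real (Suc j) * h) \<omega> - B (real j * h) \<omega>))" for \<omega>
  let ?F = "noise_filtration M B Y E (real k * h)" and ?D = "\<lambda>\<omega>. B (real (Suc k) * h) \<omega> - B (real k * h) \<omega>"
  have R_adapted: "R \<in> borel_measurable ?F"
    unfolding R_def[abs_def]
  proof (intro borel_measurable_sum)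
    fix j assume "j \<in> {..<k}"
    then have [measurable]: "Z j \<in> borel_measurable ?F" "B (real (Suc j) * h) \<in> borel_measurable ?F"
      "B (real j * h) \<in> borel_measurable ?F"
      using measurable_noise_filtration_mono[OF Z, of j "real k * h"] h
      by (auto intro!: brownian_measurable_noise_filtration mult_right_mono)
    show "(\<lambda>\<omega>. \<sigma> (Z j \<omega>) * (B (real (Suc j) * h) \<omega> - B (real j * h) \<omega>)) \<in> borel_measurable ?F"
      by measurable
  qed
  have sub: "subalgebra M ?F"
    using BM Y_measurable E_measurable by (intro subalgebra_noise_filtration) (auto simp: std_brownian_motion_def)
  have "indep_set (sets ?F) {?D -` H \<inter> space M | H. H \<in> sets borel}"
    using h by (intro indep_noise_filtration_brownian_increment) auto
  moreover have "distributed M lborel ?D (normal_density 0 (sqrt h))"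
  proof -
    have "0 \<le> real k * h" "real k * h < real (Suc k) * h" using h by auto
    then have "distributed M lborel ?D (normal_density 0 (sqrt (real (Suc k) * h - real k * h)))"
      using BM unfolding std_brownian_motion_def by blast
    then show ?thesis by (simp add: algebra_simps)
  qed
  moreover have "(\<lambda>\<omega>. exp (\<theta> * R \<omega>)) \<in> borel_measurable ?F" "(\<lambda>\<omega>. \<sigma> (Z k \<omega>)) \<in> borel_measurable ?F"
    using R_adapted Z[of k] by measurable
  ultimately have step: "(\<integral>\<^sup>+\<omega>. ennreal (exp (\<theta> * R \<omega>)) * ennreal (exp (\<theta> * \<sigma> (Z k \<omega>) * ?D \<omega>)) \<partial>M)
      \<le> ennreal (exp (\<theta>\<^sup>2 * S\<^sup>2 * h / 2)) * (\<integral>\<^sup>+\<omega>. ennreal (exp (\<theta> * R \<omega>)) \<partial>M)"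
    using h \<sigma>_bound by (intro nn_integral_mult_exp_gaussian_le[OF sub]) auto
  have "(\<integral>\<^sup>+\<omega>. ennreal (exp (\<theta> * (\<Sum>j<Suc k. \<sigma> (Z j \<omega>) * (B (real (Suc j) * h) \<omega> - B (real j * h) \<omega>)))) \<partial>M)
      = (\<integral>\<^sup>+\<omega>. ennreal (exp (\<theta> * R \<omega>)) * ennreal (exp (\<theta> * \<sigma> (Z k \<omega>) * ?D \<omega>)) \<partial>M)"
    by (intro nn_integral_cong) (simp add: R_def ennreal_mult[symmetric] exp_add[symmetric] algebra_simps)
  also have "\<dots> \<le> ennreal (exp (\<theta>\<^sup>2 * S\<^sup>2 * h / 2)) * (\<integral>\<^sup>+\<omega>. ennreal (exp (\<theta> * R \<omega>)) \<partial>M)"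
    by (rule step)
  also have "\<dots> \<le> ennreal (exp (\<theta>\<^sup>2 * S\<^sup>2 * h / 2)) * ennreal (exp (\<theta>\<^sup>2 * S\<^sup>2 * (k * h) / 2))"
    using Suc.IH by (intro mult_left_mono) (simp_all add: R_def)
  also have "\<dots> = ennreal (exp (\<theta>\<^sup>2 * S\<^sup>2 * (Suc k * h) / 2))"
    by (simp add: ennreal_mult[symmetric] exp_add[symmetric] add_divide_distrib algebra_simps)
  finally show ?case .
qed

lemma subgaussian_ito_riemann_sum:
  fixes X :: "real \<Rightarrow> 'a \<Rightarrow> real" and \<sigma> :: "real \<Rightarrow> real"
  assumes [measurable]: "\<And>s. X s \<in> borel_measurable M"
    and adapted: "adapted_completed M (noise_filtration M B Y E) X"
    and \<sigma>_measurable[measurable]: "\<sigma> \<in> borel_measurable borel" and \<sigma>_bound: "\<And>y. \<bar>\<sigma> y\<bar> \<le> S"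
    and t: "t > 0"
  shows "subgaussian M (S\<^sup>2 * t) (ito_riemann_sum \<sigma> X B t n)"
proof -
  have [measurable]: "B r \<in> borel_measurable M" for r
    using BM by (simp add: std_brownian_motion_def)
  define h where "h = t / 2 ^ n"
  have h: "h > 0" using t by (simp add: h_def)
  have "real j * h \<ge> 0" for j using h by simp
  then have "\<forall>j. \<exists>Z \<in> borel_measurable (noise_filtration M B Y E (real j * h)). AE \<omega> in M. X (real j * h) \<omega> = Z \<omega>"
    using adapted unfolding adapted_completed_def by blast
  then obtain Z where Z: "\<And>j. Z j \<in> borel_measurable (noise_filtration M B Y E (real j * h))"
    and X_eq_Z: "\<And>j. AE \<omega> in M. X (real j * h) \<omega> = Z j \<omega>"
    by metis
  have "AE \<omega> in M. \<forall>j. X (real j * h) \<omega> = Z j \<omega>"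
    using X_eq_Z by (simp add: AE_all_countable)
  then have "AE \<omega> in M. ito_riemann_sum \<sigma> X B t n \<omega>
      = (\<Sum>j<2 ^ n. \<sigma> (Z j \<omega>) * (B (real (Suc j) * h) \<omega> - B (real j * h) \<omega>))"
    by eventually_elim (simp add: ito_riemann_sum_def h_def)
  then have "(\<integral>\<^sup>+\<omega>. ennreal (exp (\<theta> * ito_riemann_sum \<sigma> X B t n \<omega>)) \<partial>M)
      \<le> ennreal (exp (\<theta>\<^sup>2 * S\<^sup>2 * (2 ^ n * h) / 2))" for \<theta>
    using nn_integral_exp_adapted_sum_le[OF Z h \<sigma>_measurable \<sigma>_bound, of \<theta> "2 ^ n"]
    by (subst nn_integral_cong_AE) auto
  moreover have "ito_riemann_sum \<sigma> X B t n \<in> borel_measurable M"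
    unfolding ito_riemann_sum_def[abs_def] by measurable
  ultimately show ?thesis
    unfolding subgaussian_def by (simp add: h_def mult.assoc)
qed

end

end

section \<open>The drift term\<close>

lemma abs_LINT_atLeastAtMost_le:
  fixes f :: "real \<Rightarrow> real"
  assumes t: "t \<ge> 0" and bound: "\<And>s. \<bar>f s\<bar> \<le> C"
  shows "\<bar>LINT s:{0..t}|lborel. f s\<bar> \<le> C * t"
proof -
  have C: "C \<ge> 0" using bound[of 0] by linarith
  let ?f = "\<lambda>s. indicator {0..t} s *\<^sub>R f s"
  show ?thesis
  proof (cases "integrable lborel ?f")
    case True
    have "ennreal (norm (integral\<^sup>L lborel ?f)) \<le> (\<integral>\<^sup>+s. norm (?f s) \<partial>lborel)"
      using integral_norm_bound_ennreal[OF True] by simp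
    also have "\<dots> \<le> (\<integral>\<^sup>+s. ennreal C * indicator {0..t} s \<partial>lborel)"
      by (intro nn_integral_mono) (auto simp: indicator_def bound intro!: ennreal_leI)
    also have "\<dots> = ennreal (C * t)"
      using t C by (simp add: nn_integral_cmult_indicator ennreal_mult)
    finally show ?thesis using t C by (simp add: ennreal_le_iff set_lebesgue_integral_def)
  next
    case False
    then show ?thesis using t C by (simp add: set_lebesgue_integral_def not_integrable_integral_eq)
  qed
qed

lemma cadlag_tendsto_dyadic_ceiling:
  fixes f :: "real \<Rightarrow> real"
  assumes cadlag: "cadlag_on_nonneg f" and s: "s \<ge> 0"
  shows "(\<lambda>m. f (\<lceil>s * 2 ^ m\<rceil> / 2 ^ m)) \<longlonglongrightarrow> f s"
proof (rule tendstoI)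
  fix e :: real assume e: "e > 0"
  have "(f \<longlongrightarrow> f s) (at_right s)"
    using cadlag s unfolding cadlag_on_nonneg_def continuous_within by blast
  then have "eventually (\<lambda>y. dist (f y) (f s) < e) (at_right s)" using e by (rule tendstoD)
  then obtain d where d: "d > s" and close: "\<And>y. s < y \<Longrightarrow> y < d \<Longrightarrow> dist (f y) (f s) < e"
    using eventually_at_right[of s "s + 1"] by auto
  obtain N where N: "(1 / 2 :: real) ^ N < d - s" using real_arch_pow_inv[of "d - s" "1 / 2"] d by auto
  show "eventually (\<lambda>m. dist (f (\<lceil>s * 2 ^ m\<rceil> / 2 ^ m)) (f s) < e) sequentially"
    unfolding eventually_sequentially
  proof (intro exI allI impI)
    fix m assume "N \<le> m"
    let ?c = "\<lceil>s * 2 ^ m\<rceil> / (2 :: real) ^ m"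
    have "s \<le> ?c" by (simp add: le_divide_eq)
    have "real_of_int \<lceil>s * 2 ^ m\<rceil> < s * 2 ^ m + 1" by linarith
    then have "?c < s + (1 / 2) ^ m" by (simp add: divide_less_eq distrib_right power_one_over)
    also have "(1 / 2 :: real) ^ m \<le> (1 / 2) ^ N" using \<open>N \<le> m\<close> by (intro power_decreasing) auto
    finally have "?c < d" using N by linarith
    then show "dist (f ?c) (f s) < e"
      using \<open>s \<le> ?c\<close> close e by (cases "?c = s") auto
  qed
qed

lemma borel_measurable_LINT_cadlag:
  fixes X :: "real \<Rightarrow> 'a \<Rightarrow> real" and b :: "real \<Rightarrow> real"
  assumes X: "\<And>r. X r \<in> borel_measurable M" and cadlag: "\<And>\<omega>. \<omega> \<in> space M \<Longrightarrow> cadlag_on_nonneg (\<lambda>r. X r \<omega>)"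
    and b: "continuous_on UNIV b"
  shows "(\<lambda>\<omega>. LINT s:{0..t}|lborel. b (X s \<omega>)) \<in> borel_measurable M"
proof -
  have [measurable]: "b \<in> borel_measurable borel" using b by (rule borel_measurable_continuous_onI)
  define g where "g z = indicator {0..t} (snd z) * b (X (snd z) (fst z))" for z :: "'a \<times> real"
  \<comment> \<open>\<open>g\<close> is a pointwise limit of functions that are piecewise constant in time, by right continuity\<close>
  define g' where "g' m z = indicator {0..t} (snd z) * b (X (\<lceil>snd z * 2 ^ m\<rceil> / 2 ^ m) (fst z))"
    for m and z :: "'a \<times> real"
  have "g' m \<in> borel_measurable (M \<Otimes>\<^sub>M lborel)" for m
  proof -
    let ?f = "\<lambda>i::int. \<lambda>z. indicator {0..t} (snd z) * b (X (real_of_int i / 2 ^ m) (fst z))"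
    have "(\<lambda>z. ?f \<lceil>snd z * 2 ^ m\<rceil> z) \<in> borel_measurable (M \<Otimes>\<^sub>M lborel)"
    proof (rule measurable_compose_countable[where f = ?f and g = "\<lambda>z. \<lceil>snd z * 2 ^ m\<rceil>"])
      fix i :: int
      have [measurable]: "X (real_of_int i / 2 ^ m) \<in> borel_measurable M" by (rule X)
      show "?f i \<in> borel_measurable (M \<Otimes>\<^sub>M lborel)" by measurable
    qed measurable
    then show ?thesis unfolding g'_def by simp
  qed
  moreover have "(\<lambda>m. g' m z) \<longlonglongrightarrow> g z" if "z \<in> space (M \<Otimes>\<^sub>M lborel)" for z
  proof (cases "snd z \<in> {0..t}")
    case True
    have "fst z \<in> space M" using that by (auto simp: space_pair_measure)
    then have "(\<lambda>m. X (\<lceil>snd z * 2 ^ m\<rceil> / 2 ^ m) (fst z)) \<longlonglongrightarrow> X (snd z) (fst z)"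
      using cadlag_tendsto_dyadic_ceiling[OF cadlag, of "fst z" "snd z"] True by simp
    then show ?thesis
      using True continuous_on_tendsto_compose[OF b] unfolding g'_def g_def by simp
  qed (simp add: g'_def g_def)
  ultimately have "g \<in> borel_measurable (M \<Otimes>\<^sub>M lborel)"
    by (rule borel_measurable_LIMSEQ_real[rotated])
  then have "(\<lambda>\<omega>. \<integral>s. g (\<omega>, s) \<partial>lborel) \<in> borel_measurable M"
    by (intro lborel.borel_measurable_lebesgue_integral) simp
  then show ?thesis unfolding set_lebesgue_integral_def g_def by simp
qed

section \<open>Elementary estimates of the three tail terms\<close>

lemma sqrt_le_self: "1 \<le> x \<Longrightarrow> sqrt x \<le> x"
  using mult_left_mono[of 1 "sqrt x" "sqrt x"] real_sqrt_ge_one[of x] by simp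

lemma square_div_16_le_exp_half:
  fixes x :: real
  assumes x: "x \<ge> 0"
  shows "x\<^sup>2 / 16 \<le> exp (x / 2)"
proof -
  have "x\<^sup>2 / 16 = (x / 4)\<^sup>2" by (simp add: power_divide)
  also have "\<dots> \<le> (exp (x / 4))\<^sup>2"
  proof (rule power_mono)
    show "x / 4 \<le> exp (x / 4)" using exp_ge_add_one_self[of "x / 4"] by linarith
  qed (use x in simp)
  also have "\<dots> = exp (x / 2)" by (simp add: power2_eq_square exp_add[symmetric])
  finally show ?thesis .
qed

text \<open>In the three lemmas below \<open>L = ln (r / t)\<close>, and \<open>r \<surd>L\<close> is the exponent of the target bound.\<close>

lemma brownian_term_le:
  assumes t: "t > 0" and r: "r > 0" and L: "r / t = exp L" "L \<ge> 1"
    and S: "S > 0" and k: "k \<le> 1 / (72 * S\<^sup>2)"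
  shows "exp (- (r / 6)\<^sup>2 / (2 * (S\<^sup>2 * t))) \<le> exp (- k * (r * sqrt L))"
proof -
  have "sqrt L \<le> exp L"
    using sqrt_le_self[OF L(2)] exp_ge_add_one_self[of L] by linarith
  then have "r * sqrt L / (72 * S\<^sup>2) \<le> r * (r / t) / (72 * S\<^sup>2)"
    unfolding L(1) using r S by (intro divide_right_mono mult_left_mono) auto
  also have "r * (r / t) / (72 * S\<^sup>2) = (r / 6)\<^sup>2 / (2 * (S\<^sup>2 * t))"
    using t S by (simp add: power2_eq_square field_simps)
  finally have "k * (r * sqrt L) \<le> (r / 6)\<^sup>2 / (2 * (S\<^sup>2 * t))"
    using mult_right_mono[OF k, of "r * sqrt L"] r L(2) by simp
  then show ?thesis by simp
qed

lemma poisson_term_le: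
  assumes t: "t > 0" and r: "r > 0" and l: "l > 0" and L: "r / t = exp L" "L \<ge> 1" "16 * exp 1 * l \<le> L"
    and k: "k \<le> 1 / 2" and n: "n = nat \<lfloor>r / sqrt L\<rfloor>"
  shows "(exp 1 * l * t / Suc n) ^ Suc n \<le> exp (- k * (r * sqrt L))"
proof -
  define q where "q = r / sqrt L"
  have sqrt_L: "1 \<le> sqrt L" "sqrt L \<le> L" using L(2) sqrt_le_self by auto
  have "q > 0" using r sqrt_L by (simp add: q_def)
  moreover have "real n = \<lfloor>q\<rfloor>" using \<open>q > 0\<close> by (simp add: n q_def[symmetric])
  moreover have "q < \<lfloor>q\<rfloor> + 1" by simp
  ultimately have q: "q > 0" "q < Suc n" by linarith+
  have "exp 1 * l * sqrt L \<le> exp 1 * l * L" using sqrt_L l by simp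
  also have "\<dots> \<le> L / 16 * L" using L(2,3) by (intro mult_right_mono) auto
  also have "\<dots> \<le> exp (L / 2)" using square_div_16_le_exp_half[of L] L(2) by (simp add: power2_eq_square)
  finally have "exp 1 * l * sqrt L / exp L \<le> exp (L / 2) / exp L" by (intro divide_right_mono) auto
  moreover have "exp 1 * l * t / Suc n \<le> exp 1 * l * t / q"
    using q l t by (intro divide_left_mono) auto
  moreover have "exp 1 * l * t / q = exp 1 * l * sqrt L / exp L"
    using L(1) t r sqrt_L by (simp add: q_def field_simps)
  moreover have "exp (L / 2) / exp L = exp (- (L / 2))"
    using exp_diff[of "L / 2" L] by (simp add: field_simps)
  ultimately have base: "exp 1 * l * t / Suc n \<le> exp (- (L / 2))" by linarith
  have "(exp 1 * l * t / Suc n) ^ Suc n \<le> exp (- (L / 2)) ^ Suc n"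
    using base l t by (intro power_mono) auto
  also have "\<dots> = exp (real (Suc n) * - (L / 2))" by (rule exp_of_nat_mult[symmetric])
  also have "\<dots> = exp (- (L / 2 * Suc n))" by (simp only: mult_minus_right mult.commute)
  also have "\<dots> \<le> exp (- (L / 2 * q))"
  proof -
    have "L / 2 * q \<le> L / 2 * Suc n" using q L(2) by (intro mult_left_mono) auto
    then show ?thesis by simp
  qed
  also have "L / 2 * q = r * (L / sqrt L) / 2" by (simp add: q_def ac_simps)
  also have "L / sqrt L = sqrt L" using L(2) by (simp add: real_div_sqrt)
  also have "exp (- (r * sqrt L / 2)) \<le> exp (- k * (r * sqrt L))"
    using mult_right_mono[OF k, of "r * sqrt L"] r sqrt_L by simp
  finally show ?thesis .
qed

lemma compound_gaussian_term_le:
  assumes \<beta>: "\<beta> > 0" and r: "r > 0" and L: "L \<ge> 1" "L \<ge> 2 / c\<^sup>2" and c: "c > 0" "4 * c \<le> 1 / (18 * \<beta>)"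
    and n: "n = nat \<lfloor>r / sqrt L\<rfloor>"
  shows "real n * (2 * exp (- (r / 3)\<^sup>2 / (2 * (real n * \<beta>)))) \<le> exp (- c * (r * sqrt L)) / 2"
proof (cases "n = 0")
  case False
  define q where "q = r / sqrt L"
  define w where "w = r * sqrt L"
  have sqrt_L: "sqrt L \<ge> 1" using L(1) by simp
  have "q > 0" using r sqrt_L by (simp add: q_def)
  moreover have "real n = \<lfloor>q\<rfloor>" using \<open>q > 0\<close> by (simp add: n q_def[symmetric])
  moreover have "\<lfloor>q\<rfloor> \<le> q" by simp
  ultimately have q: "real n \<le> q" "1 \<le> q" using False by linarith+
  have "q * L = r * (L / sqrt L)" by (simp add: q_def ac_simps)
  also have "L / sqrt L = sqrt L" using L(1) by (simp add: real_div_sqrt)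
  finally have w: "w = q * L" by (simp add: w_def)
  have "q \<le> w" using q L(1) w by simp
  have "L \<le> w" using q L(1) w by simp
  have "4 * c * w \<le> w / (18 * \<beta>)"
    using mult_right_mono[OF c(2), of w] \<open>q \<le> w\<close> q by simp
  also have "w / (18 * \<beta>) = (r / 3)\<^sup>2 / (2 * (q * \<beta>))"
    using sqrt_L \<beta> r by (simp add: q_def w_def power2_eq_square field_simps)
  also have "\<dots> \<le> (r / 3)\<^sup>2 / (2 * (n * \<beta>))"
    using q False \<beta> by (intro divide_left_mono mult_left_mono mult_right_mono) auto
  finally have "real n * (2 * exp (- (r / 3)\<^sup>2 / (2 * (real n * \<beta>)))) \<le> w * (2 * exp (- (4 * c * w)))"
    using q \<open>q \<le> w\<close> by (intro mult_mono) auto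
  also have "\<dots> \<le> exp (- (c * w)) / 2"
  proof -
    have "2 \<le> c\<^sup>2 * L" using L(2) c(1) by (simp add: field_simps)
    also have "\<dots> \<le> c\<^sup>2 * w" using \<open>L \<le> w\<close> by (intro mult_left_mono) auto
    finally have "2 \<le> c\<^sup>2 * w" .
    then have "4 * w \<le> (3 * c * w / 2)\<^sup>2"
      using mult_right_mono[of 2 "c\<^sup>2 * w" w] \<open>q \<le> w\<close> q by (simp add: power2_eq_square field_simps)
    also have "\<dots> \<le> (exp (3 * c * w / 2))\<^sup>2"
    proof (rule power_mono)
      show "3 * c * w / 2 \<le> exp (3 * c * w / 2)"
        using exp_ge_add_one_self[of "3 * c * w / 2"] by linarith
    qed (use c(1) \<open>q \<le> w\<close> q in simp)
    also have "\<dots> = exp (3 * c * w)" by (simp add: power2_eq_square exp_add[symmetric])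
    finally have "4 * w \<le> exp (3 * c * w)" .
    then have "w * (2 * exp (- (4 * c * w))) \<le> exp (- (4 * c * w)) * exp (3 * c * w) / 2"
      by (simp add: mult_left_mono mult.commute)
    also have "exp (- (4 * c * w)) * exp (3 * c * w) = exp (- (c * w))"
      by (simp add: exp_add[symmetric])
    finally show ?thesis .
  qed
  finally show ?thesis by (simp add: w_def)
qed simp

lemma tail_terms_lt:
  fixes t r l \<beta> S c L :: real and n :: nat
  assumes t: "t > 0" and r: "r > 0" and l: "l > 0" and \<beta>: "\<beta> > 0" and S: "S > 0"
    and L: "r / t = exp L" "L \<ge> 1" "16 * exp 1 * l \<le> L" "L \<ge> 2 / c\<^sup>2"
    and c: "c > 0" "2 * c \<le> 1 / (72 * S\<^sup>2)" "2 * c \<le> 1 / 2" "2 * c \<le> 1 / (36 * \<beta>)"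
    and n: "n = nat \<lfloor>r / sqrt L\<rfloor>" and small: "exp (- c * (r * sqrt L)) < 1 / 2"
  shows "2 * exp (- (r / 6)\<^sup>2 / (2 * (S\<^sup>2 * t))) + (exp 1 * l * t / Suc n) ^ Suc n
      + real n * (2 * exp (- (r / 3)\<^sup>2 / (2 * (real n * \<beta>)))) < 2 * exp (- c * (r * sqrt L))"
proof -
  let ?e = "exp (- c * (r * sqrt L))"
  \<comment> \<open>the first two terms decay with the doubled rate \<open>2 c\<close>, which absorbs their constants\<close>
  have "exp (- (2 * c) * (r * sqrt L)) = ?e * ?e"
    by (simp add: exp_add[symmetric])
  also have "\<dots> < ?e * (1 / 2)" using small by (intro mult_strict_left_mono) auto
  finally have double: "exp (- (2 * c) * (r * sqrt L)) < ?e / 2" by simp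
  have "4 * c \<le> 1 / (18 * \<beta>)" using c(4) \<beta> by (simp add: field_simps)
  then have "real n * (2 * exp (- (r / 3)\<^sup>2 / (2 * (real n * \<beta>)))) \<le> ?e / 2"
    using \<beta> r L(2,4) c(1) n by (intro compound_gaussian_term_le)
  moreover have "exp (- (r / 6)\<^sup>2 / (2 * (S\<^sup>2 * t))) \<le> exp (- (2 * c) * (r * sqrt L))"
    by (rule brownian_term_le[OF t r L(1,2) S c(2)])
  moreover have "(exp 1 * l * t / Suc n) ^ Suc n \<le> exp (- (2 * c) * (r * sqrt L))"
    by (rule poisson_term_le[OF t r l L(1,2,3) c(3) n])
  ultimately show ?thesis using double by linarith
qed

section \<open>The deviation bound\<close>

lemma C2_bounded_continuous: "C2_bounded f \<Longrightarrow> continuous_on UNIV f"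
  unfolding C2_bounded_def by (metis DERIV_isCont continuous_at_imp_continuous_on)

lemma C2_bounded_abs_le:
  assumes "C2_bounded f"
  obtains C where "C > 0" "\<And>y. \<bar>f y\<bar> \<le> C"
proof -
  obtain C where C: "\<forall>y\<in>range f. norm y \<le> C"
    using assms unfolding C2_bounded_def bounded_iff by blast
  show ?thesis
  proof (rule that[of "max C 1"])
    show "\<bar>f y\<bar> \<le> max C 1" for y using C by (auto simp: le_max_iff_disj)
  qed simp
qed

lemma (in prob_space) sde_ito_part_tail:
  assumes setting: "jump_setting M B Y E \<phi> l" and sde: "sde_solution M B Y E \<sigma> b x X"
    and \<sigma>: "continuous_on UNIV \<sigma>" "\<And>y. \<bar>\<sigma> y\<bar> \<le> S" and S: "S > 0"
    and b: "continuous_on UNIV b" and t: "t > 0" and a: "a > 0"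
  shows "prob {\<omega>\<in>space M. \<bar>X t \<omega> - x - (LINT s:{0..t}|lborel. b (X s \<omega>)) - jump_part E Y t \<omega>\<bar> > a + a}
    \<le> 2 * exp (- a\<^sup>2 / (2 * (S\<^sup>2 * t)))"
proof (rule subgaussian_limit_abs_tail)
  have BM: "std_brownian_motion M B"
    and indep: "indep_sets (\<lambda>k::nat. if k = 0 then gen_sigma M B {0..}
      else if k = 1 then gen_sigma M Y UNIV else gen_sigma M E UNIV) {0, 1, 2}"
    and "\<And>i. distributed M lborel (Y i) \<phi>" "\<And>i. distributed M lborel (E i) (exponential_density l)"
    using setting unfolding jump_setting_def by blast+
  then have [measurable]: "Y i \<in> borel_measurable M" "E i \<in> borel_measurable M" for i
    by (auto simp: distributed_def)
  have [measurable]: "\<And>s. X s \<in> borel_measurable M"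
    and cadlag: "\<And>\<omega>. \<omega> \<in> space M \<Longrightarrow> cadlag_on_nonneg (\<lambda>s. X s \<omega>)"
    and adapted: "adapted_completed M (noise_filtration M B Y E) X"
    using sde unfolding sde_solution_def by blast+
  have [measurable]: "(\<lambda>\<omega>. LINT s:{0..t}|lborel. b (X s \<omega>)) \<in> borel_measurable M"
    using cadlag b by (intro borel_measurable_LINT_cadlag) auto
  have [measurable]: "jump_part E Y t \<in> borel_measurable M" by (intro jump_part_measurable) auto
  show "(\<lambda>\<omega>. X t \<omega> - x - (LINT s:{0..t}|lborel. b (X s \<omega>)) - jump_part E Y t \<omega>) \<in> borel_measurable M"
    by measurable
  show "subgaussian M (S\<^sup>2 * t) (ito_riemann_sum \<sigma> X B t n)" for n
    using BM indep _ _ _ adapted _ \<sigma>(2) t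
    by (rule subgaussian_ito_riemann_sum) (auto intro: borel_measurable_continuous_onI[OF \<sigma>(1)])
  have "\<And>\<epsilon>. \<epsilon> > 0 \<Longrightarrow> (\<lambda>n. prob {\<omega>\<in>space M. \<bar>ito_riemann_sum \<sigma> X B t n \<omega>
      - (X t \<omega> - x - (LINT s:{0..t}|lborel. b (X s \<omega>)) - jump_part E Y t \<omega>)\<bar> > \<epsilon>}) \<longlonglongrightarrow> 0"
    using sde t unfolding sde_solution_def by auto
  then show "(\<lambda>n. prob {\<omega>\<in>space M. \<bar>ito_riemann_sum \<sigma> X B t n \<omega>
      - (X t \<omega> - x - (LINT s:{0..t}|lborel. b (X s \<omega>)) - jump_part E Y t \<omega>)\<bar> > a}) \<longlonglongrightarrow> 0"
    using a by blast
qed (use S t a in auto)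

text \<open>The drift is at most \<open>C t \<le> r / 3\<close>, so a deviation beyond \<open>r\<close> forces the Ito part or the
  jump part beyond \<open>r / 3\<close>.\<close>

lemma (in prob_space) sde_deviation_tail_le:
  fixes n :: nat
  assumes setting: "jump_setting M B Y E (normal_density 0 (sqrt \<beta>)) l" and \<beta>: "\<beta> > 0"
    and sde: "sde_solution M B Y E \<sigma> b x X"
    and \<sigma>: "continuous_on UNIV \<sigma>" "\<And>y. \<bar>\<sigma> y\<bar> \<le> S" and S: "S > 0"
    and b: "continuous_on UNIV b" "\<And>y. \<bar>b y\<bar> \<le> C"
    and t: "t > 0" and r: "r > 0" and drift: "C * t \<le> r / 3"
  shows "prob {\<omega>\<in>space M. \<bar>X t \<omega> - x\<bar> > r} \<le> 2 * exp (- (r / 6)\<^sup>2 / (2 * (S\<^sup>2 * t)))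
    + (exp 1 * l * t / Suc n) ^ Suc n + real n * (2 * exp (- (r / 3)\<^sup>2 / (2 * (real n * \<beta>))))"
proof -
  have l: "l > 0" and IY: "indep_vars (\<lambda>_. borel) Y UNIV"
    and DY: "\<And>i. distributed M lborel (Y i) (normal_density 0 (sqrt \<beta>))"
    and IE: "indep_vars (\<lambda>_. borel) E UNIV" and DE: "\<And>i. distributed M lborel (E i) (exponential_density l)"
    using setting unfolding jump_setting_def by blast+
  have [measurable]: "Y i \<in> borel_measurable M" "E i \<in> borel_measurable M" for i
    using DY[of i] DE[of i] by (auto simp: distributed_def)
  have X: "\<And>s. X s \<in> borel_measurable M" and cadlag: "\<And>\<omega>. \<omega> \<in> space M \<Longrightarrow> cadlag_on_nonneg (\<lambda>s. X s \<omega>)"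
    using sde unfolding sde_solution_def by blast+
  define D where "D \<omega> = (LINT s:{0..t}|lborel. b (X s \<omega>))" for \<omega>
  define J where "J = jump_part E Y t"
  define I where "I \<omega> = X t \<omega> - x - D \<omega> - J \<omega>" for \<omega>
  have [measurable]: "D \<in> borel_measurable M" "J \<in> borel_measurable M" "X t \<in> borel_measurable M"
    unfolding D_def[abs_def] J_def using borel_measurable_LINT_cadlag[OF X cadlag b(1)]
    by (auto intro: jump_part_measurable X)
  have "{\<omega>\<in>space M. \<bar>X t \<omega> - x\<bar> > r} \<subseteq> {\<omega>\<in>space M. \<bar>I \<omega>\<bar> > r / 6 + r / 6} \<union> {\<omega>\<in>space M. \<bar>J \<omega>\<bar> > r / 3}"
  proof (intro subsetI)
    fix \<omega> assume "\<omega> \<in> {\<omega>\<in>space M. \<bar>X t \<omega> - x\<bar> > r}"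
    moreover have "\<bar>D \<omega>\<bar> \<le> r / 3"
      using abs_LINT_atLeastAtMost_le[of t "\<lambda>s. b (X s \<omega>)" C] t b(2) drift by (simp add: D_def)
    ultimately show "\<omega> \<in> {\<omega>\<in>space M. \<bar>I \<omega>\<bar> > r / 6 + r / 6} \<union> {\<omega>\<in>space M. \<bar>J \<omega>\<bar> > r / 3}"
      unfolding I_def by (simp, smt (verit))
  qed
  then have "prob {\<omega>\<in>space M. \<bar>X t \<omega> - x\<bar> > r}
      \<le> prob {\<omega>\<in>space M. \<bar>I \<omega>\<bar> > r / 6 + r / 6} + prob {\<omega>\<in>space M. \<bar>J \<omega>\<bar> > r / 3}"
    unfolding I_def by (intro order_trans[OF finite_measure_mono measure_Un_le]) measurable
  moreover have "prob {\<omega>\<in>space M. \<bar>I \<omega>\<bar> > r / 6 + r / 6} \<le> 2 * exp (- (r / 6)\<^sup>2 / (2 * (S\<^sup>2 * t)))"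
    unfolding I_def D_def J_def using r by (intro sde_ito_part_tail[OF setting sde \<sigma> S b(1) t]) simp
  moreover have "prob {\<omega>\<in>space M. \<bar>J \<omega>\<bar> > r / 3}
      \<le> (exp 1 * l * t / Suc n) ^ Suc n + real n * (2 * exp (- (r / 3)\<^sup>2 / (2 * (real n * \<beta>))))"
    unfolding J_def using r t by (intro jump_part_tail[OF IY DY IE DE l \<beta>]) auto
  ultimately show ?thesis by linarith
qed

lemma (in prob_space) sde_deviation_le:
  assumes setting: "jump_setting M B Y E (normal_density 0 (sqrt \<beta>)) l" and \<beta>: "\<beta> > 0"
    and sde: "sde_solution M B Y E \<sigma> b x X"
    and \<sigma>: "continuous_on UNIV \<sigma>" "\<And>y. \<bar>\<sigma> y\<bar> \<le> S" and S: "S > 0"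
    and b: "continuous_on UNIV b" "\<And>y. \<bar>b y\<bar> \<le> C"
    and t: "t > 0" and r: "r > 0" and drift: "C * t \<le> r / 3"
    and L: "r / t = exp L" "L \<ge> 1" "16 * exp 1 * l \<le> L" "L \<ge> 2 / c\<^sup>2"
    and c: "c > 0" "2 * c \<le> 1 / (72 * S\<^sup>2)" "2 * c \<le> 1 / 2" "2 * c \<le> 1 / (36 * \<beta>)"
  shows "prob {\<omega>\<in>space M. \<bar>X t \<omega> - x\<bar> > r} \<le> 2 * exp (- c * (r * sqrt L))"
proof (cases "exp (- c * (r * sqrt L)) < 1 / 2")
  case True
  let ?n = "nat \<lfloor>r / sqrt L\<rfloor>"
  have "l > 0" using setting by (simp add: jump_setting_def)
  have "prob {\<omega>\<in>space M. \<bar>X t \<omega> - x\<bar> > r} \<le> 2 * exp (- (r / 6)\<^sup>2 / (2 * (S\<^sup>2 * t)))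
      + (exp 1 * l * t / Suc ?n) ^ Suc ?n + real ?n * (2 * exp (- (r / 3)\<^sup>2 / (2 * (real ?n * \<beta>))))"
    by (rule sde_deviation_tail_le[OF setting \<beta> sde \<sigma> S b t r drift])
  also have "\<dots> < 2 * exp (- c * (r * sqrt L))"
    using t r \<open>l > 0\<close> \<beta> S L c refl True by (rule tail_terms_lt)
  finally show ?thesis by simp
next
  case False
  then show ?thesis using prob_le_1[of "{\<omega>\<in>space M. \<bar>X t \<omega> - x\<bar> > r}"] by linarith
qed

theorem mainTheorem6:
  fixes M :: "'a measure"
    and B :: "real \<Rightarrow> 'a \<Rightarrow> real"
    and Y E :: "nat \<Rightarrow> 'a \<Rightarrow> real"
    and \<sigma> b :: "real \<Rightarrow> real"
    and l \<beta> \<rho> :: real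
    and X :: "real \<Rightarrow> real \<Rightarrow> 'a \<Rightarrow> real"
  assumes "\<beta> > 0"
    and "jump_setting M B Y E (normal_density 0 (sqrt \<beta>)) l"
    and "C2_bounded \<sigma>" and "C2_bounded b"
    and "\<rho> > 0" and "\<forall>y. \<bar>\<sigma> y\<bar> \<ge> \<rho>"
    and "\<forall>x. sde_solution M B Y E \<sigma> b x (X x)"
  shows "\<exists>c>0. \<exists>K>0. \<forall>t>0. \<forall>x y::real. \<bar>y - x\<bar> / t \<ge> K \<longrightarrow>
           measure M {\<omega>\<in>space M. \<bar>X x t \<omega> - x\<bar> > \<bar>y - x\<bar>}
             \<le> 2 * exp (- c * \<bar>y - x\<bar> * sqrt (ln (\<bar>y - x\<bar> / t)))"
proof -
  interpret prob_space M using assms(2) by (simp add: jump_setting_def)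
  obtain S where S: "S > 0" "\<And>y. \<bar>\<sigma> y\<bar> \<le> S" using C2_bounded_abs_le[OF assms(3)] by blast
  obtain C where C: "C > 0" "\<And>y. \<bar>b y\<bar> \<le> C" using C2_bounded_abs_le[OF assms(4)] by blast
  define c where "c = min (1 / (72 * S\<^sup>2)) (min (1 / 2) (1 / (36 * \<beta>))) / 2"
  define L0 where "L0 = max 1 (max (16 * exp 1 * l) (2 / c\<^sup>2))"
  have c: "c > 0" "2 * c \<le> 1 / (72 * S\<^sup>2)" "2 * c \<le> 1 / 2" "2 * c \<le> 1 / (36 * \<beta>)"
    using S(1) assms(1) by (simp_all add: c_def)
  have "prob {\<omega>\<in>space M. \<bar>X x t \<omega> - x\<bar> > \<bar>y - x\<bar>} \<le> 2 * exp (- c * \<bar>y - x\<bar> * sqrt (ln (\<bar>y - x\<bar> / t)))"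
    if t: "t > 0" and K: "exp (max L0 (3 * C)) \<le> \<bar>y - x\<bar> / t" for t x y :: real
  proof -
    have "3 * C \<le> exp (3 * C)" using exp_ge_add_one_self[of "3 * C"] by linarith
    also have "\<dots> \<le> \<bar>y - x\<bar> / t" using K by (meson exp_le_cancel_iff max.cobounded2 order_trans)
    finally have drift: "C * t \<le> \<bar>y - x\<bar> / 3" using t by (simp add: field_simps)
    have "\<bar>y - x\<bar> / t > 0" using K exp_gt_zero[of "max L0 (3 * C)"] by linarith
    then have "\<bar>y - x\<bar> > 0" "\<bar>y - x\<bar> / t = exp (ln (\<bar>y - x\<bar> / t))" "max L0 (3 * C) \<le> ln (\<bar>y - x\<bar> / t)"
      using t K ln_le_cancel_iff[of "exp (max L0 (3 * C))" "\<bar>y - x\<bar> / t"] by (auto simp: zero_less_divide_iff)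
    then show ?thesis
      using assms(1,2,7) S C c t drift assms(3,4)[THEN C2_bounded_continuous] unfolding mult.assoc L0_def
      by (intro sde_deviation_le[where \<sigma> = \<sigma> and b = b and S = S and C = C]) auto
  qed
  then show ?thesis using c exp_gt_zero[of "max L0 (3 * C)"] by blast
qed

end
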